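(* Let $T$ be a metric tree with six leaves (unbounded legs), all of whose vertices have genus $0$. Then, up to isomorphism, there is exactly one metric graph $\Gamma$ of genus two with six legs together with a tropical hyperelliptic cover $\pi\colon\Gamma\to T$ (a harmonic map of degree two) that is branched at all six legs of $T$.
   Context: A metric graph is a connected graph with vertices $V$, edges $E$ and unbounded legs, with a genus function $g\colon V\to\mathbb{Z}_{\ge0}$ and positive lengths on edges (legs have infinite length); its genus is $b_1+\sum_v g(v)$, $b_1=|E|-|V|+1$. A morphism of metric graphs $\pi\colon\Gamma\to\Gamma'$ sends vertices to vertices and edges (legs) to edges (legs), linearly with integer slope $w(e)\in\mathbb{Z}_{>0}$ on each edge or leg $e$ (so $w(e)=\ell(\pi(e))/\ell(e)$). It is harmonic if for every vertex $v$ of $\Gamma$ the number $d_v=\sum_{e\ni v,\ \pi(e)=e'}w(e)$ is independent of the edge $e'$ adjacent to $\pi(v)$; the degree of $\pi$ is the sum of the $d_v$ over the fiber of any vertex. A tropical hyperelliptic cover of a genus-zero metric tree $T$ is a surjective degree-two harmonic map $\pi\colon\Gamma\to T$ satisfying, at every vertex $v$ of $\Gamma$, the local Riemann–Hurwitz condition $2-2g(v)=2d_v-\#\{e\ni v: w(e)=2\}$. A leg or edge of $T$ is a branch point if it is covered by a leg or edge of $\Gamma$ of weight $2$. *)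

theory Defs
  imports Complex_Main "HOL-Library.Multiset"
begin

text \<open>A metric graph: vertex set V, set E of (bounded) edges, set L of legs
(unbounded, infinite length).  For an edge e, ends e = (a,b) are its two endpoints
(loops allowed, a = b); for a leg l, fst (ends l) is the vertex it is attached to
(the second component is ignored).  len gives the positive lengths of edges;
gen is the genus function on vertices.\<close>

record ('v, 'e) mgraph =
  V :: "'v set"
  E :: "'e set"
  L :: "'e set"
  ends :: "'e \<Rightarrow> 'v \<times> 'v"
  len :: "'e \<Rightarrow> real"
  gen :: "'v \<Rightarrow> nat"

definition adj_rel :: "('v, 'e, 'x) mgraph_scheme \<Rightarrow> ('v \<times> 'v) set" where
  "adj_rel G = {(u, v). \<exists>e \<in> E G. ends G e = (u, v) \<or> ends G e = (v, u)}"

definition metric_graph :: "('v, 'e, 'x) mgraph_scheme \<Rightarrow> bool" where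
  "metric_graph G \<longleftrightarrow>
     finite (V G) \<and> V G \<noteq> {} \<and> finite (E G) \<and> finite (L G) \<and> E G \<inter> L G = {} \<and>
     (\<forall>e \<in> E G. fst (ends G e) \<in> V G \<and> snd (ends G e) \<in> V G \<and> len G e > 0) \<and>
     (\<forall>l \<in> L G. fst (ends G l) \<in> V G) \<and>
     (\<forall>u \<in> V G. \<forall>v \<in> V G. (u, v) \<in> (adj_rel G)\<^sup>*)"

definition graph_genus :: "('v, 'e, 'x) mgraph_scheme \<Rightarrow> int" where
  "graph_genus G = int (card (E G)) - int (card (V G)) + 1 + (\<Sum>v \<in> V G. int (gen G v))"

definition inc :: "('v, 'e, 'x) mgraph_scheme \<Rightarrow> 'v \<Rightarrow> 'e \<Rightarrow> nat" where
  "inc G v e =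
     (if e \<in> E G then (if fst (ends G e) = v then 1 else 0) + (if snd (ends G e) = v then 1 else 0)
      else if e \<in> L G then (if fst (ends G e) = v then 1 else 0) else 0)"

definition adjacent :: "('v, 'e, 'x) mgraph_scheme \<Rightarrow> 'v \<Rightarrow> 'e \<Rightarrow> bool" where
  "adjacent G v e \<longleftrightarrow> inc G v e > 0"

definition genus0_tree :: "('v, 'e, 'x) mgraph_scheme \<Rightarrow> bool" where
  "genus0_tree T \<longleftrightarrow> metric_graph T \<and> card (E T) + 1 = card (V T) \<and> (\<forall>v \<in> V T. gen T v = 0)"

text \<open>A morphism is given by a vertex map pV, an edge/leg map pE and the integer
slopes (weights) w on edges and legs.\<close>

definition morphism ::
  "('v, 'e, 'x) mgraph_scheme \<Rightarrow> ('u, 'f, 'y) mgraph_scheme \<Rightarrow>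
   ('v \<Rightarrow> 'u) \<Rightarrow> ('e \<Rightarrow> 'f) \<Rightarrow> ('e \<Rightarrow> nat) \<Rightarrow> bool" where
  "morphism G H pV pE w \<longleftrightarrow>
     (\<forall>v \<in> V G. pV v \<in> V H) \<and>
     (\<forall>e \<in> E G. pE e \<in> E H \<and> w e > 0 \<and>
        {# pV (fst (ends G e)), pV (snd (ends G e)) #} = {# fst (ends H (pE e)), snd (ends H (pE e)) #} \<and>
        len H (pE e) = real (w e) * len G e) \<and>
     (\<forall>l \<in> L G. pE l \<in> L H \<and> w l > 0 \<and> pV (fst (ends G l)) = fst (ends H (pE l)))"

definition local_deg ::
  "('v, 'e, 'x) mgraph_scheme \<Rightarrow> ('e \<Rightarrow> 'f) \<Rightarrow> ('e \<Rightarrow> nat) \<Rightarrow> 'v \<Rightarrow> 'f \<Rightarrow> nat" where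
  "local_deg G pE w v e' = (\<Sum>e \<in> E G \<union> L G. if pE e = e' then inc G v e * w e else 0)"

definition harmonic ::
  "('v, 'e, 'x) mgraph_scheme \<Rightarrow> ('u, 'f, 'y) mgraph_scheme \<Rightarrow>
   ('v \<Rightarrow> 'u) \<Rightarrow> ('e \<Rightarrow> 'f) \<Rightarrow> ('e \<Rightarrow> nat) \<Rightarrow> bool" where
  "harmonic G H pV pE w \<longleftrightarrow> morphism G H pV pE w \<and>
     (\<forall>v \<in> V G. \<forall>e1 \<in> E H \<union> L H. \<forall>e2 \<in> E H \<union> L H.
        adjacent H (pV v) e1 \<longrightarrow> adjacent H (pV v) e2 \<longrightarrow>
        local_deg G pE w v e1 = local_deg G pE w v e2)"

definition has_degree ::
  "('v, 'e, 'x) mgraph_scheme \<Rightarrow> ('u, 'f, 'y) mgraph_scheme \<Rightarrow>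
   ('v \<Rightarrow> 'u) \<Rightarrow> ('e \<Rightarrow> 'f) \<Rightarrow> ('e \<Rightarrow> nat) \<Rightarrow> nat \<Rightarrow> bool" where
  "has_degree G H pV pE w n \<longleftrightarrow>
     (\<forall>u \<in> V H. \<forall>e' \<in> E H \<union> L H. adjacent H u e' \<longrightarrow>
        (\<Sum>v \<in> {v \<in> V G. pV v = u}. local_deg G pE w v e') = n)"

definition surjective_mor ::
  "('v, 'e, 'x) mgraph_scheme \<Rightarrow> ('u, 'f, 'y) mgraph_scheme \<Rightarrow>
   ('v \<Rightarrow> 'u) \<Rightarrow> ('e \<Rightarrow> 'f) \<Rightarrow> bool" where
  "surjective_mor G H pV pE \<longleftrightarrow> pV ` V G = V H \<and> pE ` E G = E H \<and> pE ` L G = L H"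

text \<open>Tropical hyperelliptic cover of a genus-zero metric tree T: surjective
degree-two harmonic map satisfying local Riemann--Hurwitz at every vertex.\<close>
definition hyperelliptic_cover ::
  "('v, 'e, 'x) mgraph_scheme \<Rightarrow> ('u, 'f, 'y) mgraph_scheme \<Rightarrow>
   ('v \<Rightarrow> 'u) \<Rightarrow> ('e \<Rightarrow> 'f) \<Rightarrow> ('e \<Rightarrow> nat) \<Rightarrow> bool" where
  "hyperelliptic_cover G T pV pE w \<longleftrightarrow>
     metric_graph G \<and> genus0_tree T \<and>
     harmonic G T pV pE w \<and> surjective_mor G T pV pE \<and> has_degree G T pV pE w 2 \<and>
     (\<forall>v \<in> V G. \<forall>e' \<in> E T \<union> L T. adjacent T (pV v) e' \<longrightarrow>
        2 - 2 * int (gen G v) =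
          2 * int (local_deg G pE w v e') - int (\<Sum>e \<in> E G \<union> L G. if w e = 2 then inc G v e else 0))"

definition branch_point ::
  "('v, 'e, 'x) mgraph_scheme \<Rightarrow> ('e \<Rightarrow> 'f) \<Rightarrow> ('e \<Rightarrow> nat) \<Rightarrow> 'f \<Rightarrow> bool" where
  "branch_point G pE w e' \<longleftrightarrow> (\<exists>e \<in> E G \<union> L G. pE e = e' \<and> w e = 2)"

definition iso_covers ::
  "('v1, 'e1, 'x1) mgraph_scheme \<Rightarrow> ('v1 \<Rightarrow> 'u) \<Rightarrow> ('e1 \<Rightarrow> 'f) \<Rightarrow> ('e1 \<Rightarrow> nat) \<Rightarrow>
   ('v2, 'e2, 'x2) mgraph_scheme \<Rightarrow> ('v2 \<Rightarrow> 'u) \<Rightarrow> ('e2 \<Rightarrow> 'f) \<Rightarrow> ('e2 \<Rightarrow> nat) \<Rightarrow> bool" where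
  "iso_covers G1 pV1 pE1 w1 G2 pV2 pE2 w2 \<longleftrightarrow>
     (\<exists>fV fE. bij_betw fV (V G1) (V G2) \<and> bij_betw fE (E G1) (E G2) \<and> bij_betw fE (L G1) (L G2) \<and>
        (\<forall>e \<in> E G1. {# fV (fst (ends G1 e)), fV (snd (ends G1 e)) #} =
                     {# fst (ends G2 (fE e)), snd (ends G2 (fE e)) #} \<and> len G2 (fE e) = len G1 e) \<and>
        (\<forall>l \<in> L G1. fV (fst (ends G1 l)) = fst (ends G2 (fE l))) \<and>
        (\<forall>v \<in> V G1. gen G2 (fV v) = gen G1 v \<and> pV2 (fV v) = pV1 v) \<and>
        (\<forall>e \<in> E G1 \<union> L G1. pE2 (fE e) = pE1 e \<and> w2 (fE e) = w1 e))"

definition genus2_cover_branched_at_legs ::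
  "('v, 'e, 'x) mgraph_scheme \<Rightarrow> ('u, 'f, 'y) mgraph_scheme \<Rightarrow>
   ('v \<Rightarrow> 'u) \<Rightarrow> ('e \<Rightarrow> 'f) \<Rightarrow> ('e \<Rightarrow> nat) \<Rightarrow> bool" where
  "genus2_cover_branched_at_legs G T pV pE w \<longleftrightarrow>
     hyperelliptic_cover G T pV pE w \<and> graph_genus G = 2 \<and> card (L G) = 6 \<and>
     (\<forall>l \<in> L T. branch_point G pE w l)"

end

theory Submission
  imports Defs
begin

text \<open>Root the tree \<open>T\<close> at a vertex carrying a leg and call an edge odd if an odd number of legs
  lie below it.  For a cover branched at every leg, local Riemann--Hurwitz shows that a vertex of
  \<open>T\<close> has a single preimage exactly when some branched edge or leg meets it, that this preimage has
  genus \<open>(r - 2) / 2\<close> where \<open>r\<close> counts the branched edges and legs there, and that \<open>r\<close> is even.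
  A parity argument, starting from the deepest edges, forces the branched edges to be exactly the
  odd ones.  So the cover has one sheet over odd edges, legs and vertices meeting them, and two
  sheets elsewhere; labelling the sheets consistently from the root downwards identifies it with a
  canonical double cover built on \<open>V T \<times> bool\<close>.  That cover exists, and summing Riemann--Hurwitz
  over \<open>T\<close> gives \<open>2 g = #legs - 2\<close>, so six legs give genus two.\<close>

lemma sym_adj_rel: "sym (adj_rel G)"
  unfolding adj_rel_def sym_def by auto

lemma mset_pair_eq: "{#p, q#} = {#a, b#} \<Longrightarrow> (p = a \<and> q = b) \<or> (p = b \<and> q = a)"
  by (metis add_eq_conv_ex add_mset_eq_single)

lemma sum_nat_eq_1_singleton:
  fixes f :: "'a \<Rightarrow> nat"
  assumes "finite A" and "\<forall>x \<in> A. f x > 0" and "(\<Sum>x \<in> A. f x) = 1"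
  shows "\<exists>x. A = {x} \<and> f x = 1"
proof -
  obtain x where x: "x \<in> A" using assms(3) by force
  have "f x + (\<Sum>z \<in> A - {x}. f z) = 1" using assms(1,3) x by (simp add: sum.remove)
  then have "f x = 1" and "(\<Sum>z \<in> A - {x}. f z) = 0" using assms(2) x by auto
  then have "A - {x} = {}" using assms(1,2) by (force simp: sum_eq_0_iff)
  then show ?thesis using x \<open>f x = 1\<close> by blast
qed

lemma sum_nat_eq_2_cases:
  fixes f :: "'a \<Rightarrow> nat"
  assumes fin: "finite A" and pos: "\<forall>x \<in> A. f x > 0" and sum: "(\<Sum>x \<in> A. f x) = 2"
  shows "(\<exists>x. A = {x} \<and> f x = 2) \<or> (\<exists>x y. x \<noteq> y \<and> A = {x, y} \<and> f x = 1 \<and> f y = 1)"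
proof -
  obtain x where x: "x \<in> A" using sum by force
  have rest: "f x + (\<Sum>z \<in> A - {x}. f z) = 2" using fin sum x by (simp add: sum.remove)
  show ?thesis
  proof (cases "f x = 2")
    case True
    then have "A - {x} = {}" using rest fin pos by (force simp: sum_eq_0_iff)
    then show ?thesis using x True by blast
  next
    case False
    then have "f x = 1" "(\<Sum>z \<in> A - {x}. f z) = 1" using rest pos x by auto
    then obtain y where "A - {x} = {y}" "f y = 1"
      using sum_nat_eq_1_singleton[of "A - {x}" f] fin pos by auto
    then have "x \<noteq> y" "A = {x, y}" using x by auto
    then show ?thesis using \<open>f x = 1\<close> \<open>f y = 1\<close> by blast
  qed
qed

lemma card_filter_eq_sum: "finite A \<Longrightarrow> card {x \<in> A. P x} = (\<Sum>x \<in> A. if P x then 1 else 0)"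
  unfolding card_eq_sum by (rule sum.inter_filter)

lemma even_card_odd_iff_even_sum:
  "finite A \<Longrightarrow> even (card {a \<in> A. odd (f a :: nat)}) \<longleftrightarrow> even (\<Sum>a \<in> A. f a)"
proof (induction A rule: finite_induct)
  case (insert x F)
  have "{a \<in> insert x F. odd (f a)} =
    (if odd (f x) then insert x {a \<in> F. odd (f a)} else {a \<in> F. odd (f a)})"
    by auto
  then show ?case using insert by (auto simp: card_insert_if)
qed simp

lemma card_filter_add_card_filter_not:
  "finite A \<Longrightarrow> card {x \<in> A. P x} + card {x \<in> A. \<not> P x} = card A"
  using card_Int_Diff[of A "{x. P x}"] by (simp add: Int_def set_diff_eq add.commute conj_commute)

lemma card_two_sheets:
  assumes "finite A" and "B \<subseteq> A"
  shows "card {(x, b). x \<in> A \<and> (b \<longrightarrow> x \<in> B)} = card A + card B"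
proof -
  have "{(x, b). x \<in> A \<and> (b \<longrightarrow> x \<in> B)} = (\<lambda>x. (x, False)) ` A \<union> (\<lambda>x. (x, True)) ` B"
    using assms(2) by auto
  moreover have "card ((\<lambda>x. (x, False)) ` A \<union> (\<lambda>x. (x, True)) ` B) =
      card ((\<lambda>x. (x, False)) ` A) + card ((\<lambda>x. (x, True)) ` B)"
    using assms finite_subset by (intro card_Un_disjoint) auto
  ultimately show ?thesis by (simp add: card_image inj_on_def)
qed

lemma odd_card_add_if_symdiff_singleton:
  assumes "finite X" and "finite Y" and "(X - Y) \<union> (Y - X) = {z}"
  shows "odd (card X + card Y)"
proof -
  have "card (X - Y) + card (Y - X) = card ((X - Y) \<union> (Y - X))"
    using assms(1,2) by (intro card_Un_disjoint[symmetric]) auto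
  then have "card (X - Y) + card (Y - X) = 1" using assms(3) by simp
  moreover have "card X = card (X \<inter> Y) + card (X - Y)" "card Y = card (X \<inter> Y) + card (Y - X)"
    using card_Int_Diff[OF assms(1), of Y] card_Int_Diff[OF assms(2), of X] by (simp_all add: Int_commute)
  ultimately show ?thesis by presburger
qed

locale wf_mgraph =
  fixes G :: "('v, 'e, 'x) mgraph_scheme"
  assumes metric_graph: "metric_graph G"
begin

lemma finite_V: "finite (V G)" and finite_E: "finite (E G)" and finite_L: "finite (L G)"
  and V_nonempty: "V G \<noteq> {}" and E_L_disjoint: "E G \<inter> L G = {}"
  using metric_graph unfolding metric_graph_def by simp_all

lemma edge_ends_V: "e \<in> E G \<Longrightarrow> fst (ends G e) \<in> V G \<and> snd (ends G e) \<in> V G"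
  and edge_len_pos: "e \<in> E G \<Longrightarrow> len G e > 0"
  and leg_end_V: "l \<in> L G \<Longrightarrow> fst (ends G l) \<in> V G"
  and connected: "u \<in> V G \<Longrightarrow> v \<in> V G \<Longrightarrow> (u, v) \<in> (adj_rel G)\<^sup>*"
  using metric_graph unfolding metric_graph_def by simp_all

lemma inc_edge: "e \<in> E G \<Longrightarrow>
    inc G v e = (if fst (ends G e) = v then 1 else 0) + (if snd (ends G e) = v then 1 else 0)"
  and inc_leg: "l \<in> L G \<Longrightarrow> inc G v l = (if fst (ends G l) = v then 1 else 0)"
  unfolding inc_def using E_L_disjoint by auto

lemma ex_incident:
  assumes "E G \<union> L G \<noteq> {}" and v: "v \<in> V G"
  shows "\<exists>x \<in> E G \<union> L G. inc G v x > 0"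
proof -
  obtain y where y: "y \<in> V G" "\<exists>x \<in> E G \<union> L G. inc G y x > 0"
    using assms(1) edge_ends_V leg_end_V unfolding inc_def by fastforce
  show ?thesis
  proof (cases "v = y")
    case False
    then obtain z where "(v, z) \<in> adj_rel G"
      using connected[OF v y(1)] by (metis converse_rtranclE)
    then obtain e where "e \<in> E G" "ends G e = (v, z) \<or> ends G e = (z, v)" unfolding adj_rel_def by auto
    then show ?thesis using inc_edge by (intro bexI[of _ e]) auto
  qed (use y in blast)
qed

end

section \<open>Rooted trees\<close>

locale rooted_tree =
  fixes T :: "('tv, 'te) mgraph" and \<rho> :: 'tv
  assumes genus0_tree: "genus0_tree T" and root_V: "\<rho> \<in> V T"
begin

sublocale T: wf_mgraph T
  using genus0_tree unfolding genus0_tree_def by unfold_locales simp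

lemma card_E_V: "card (E T) + 1 = card (V T)"
  using genus0_tree unfolding genus0_tree_def by simp

lemma adj_rel_V: "(a, b) \<in> adj_rel T \<Longrightarrow> a \<in> V T \<and> b \<in> V T"
  unfolding adj_rel_def using T.edge_ends_V by (auto, metis fst_conv snd_conv)+

definition depth :: "'tv \<Rightarrow> nat" where
  "depth u = (LEAST n. (\<rho>, u) \<in> adj_rel T ^^ n)"

lemma depth_path: "u \<in> V T \<Longrightarrow> (\<rho>, u) \<in> adj_rel T ^^ depth u"
proof -
  assume "u \<in> V T"
  then obtain n where "(\<rho>, u) \<in> adj_rel T ^^ n"
    using T.connected root_V rtrancl_power by blast
  then show ?thesis unfolding depth_def by (rule LeastI)
qed

lemma depth_le: "(\<rho>, u) \<in> adj_rel T ^^ n \<Longrightarrow> depth u \<le> n"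
  unfolding depth_def by (rule Least_le)

lemma depth_adj_le: "(a, b) \<in> adj_rel T \<Longrightarrow> depth b \<le> depth a + 1"
proof -
  assume ab: "(a, b) \<in> adj_rel T"
  then have "(\<rho>, b) \<in> adj_rel T ^^ Suc (depth a)" using depth_path adj_rel_V by auto
  then show ?thesis using depth_le by fastforce
qed

lemma depth_root: "depth \<rho> = 0"
  using depth_le[of \<rho> 0] by simp

lemma depth_eq_0_iff: "u \<in> V T \<Longrightarrow> depth u = 0 \<longleftrightarrow> u = \<rho>"
  using depth_path depth_root by fastforce

definition is_parent :: "'tv \<Rightarrow> 'te \<Rightarrow> 'tv \<Rightarrow> bool" where
  "is_parent u e p \<longleftrightarrow> e \<in> E T \<and> (ends T e = (p, u) \<or> ends T e = (u, p)) \<and> depth p + 1 = depth u"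

lemma ex_parent: "u \<in> V T \<Longrightarrow> u \<noteq> \<rho> \<Longrightarrow> \<exists>e p. is_parent u e p"
proof -
  assume u: "u \<in> V T" "u \<noteq> \<rho>"
  then obtain n where n: "depth u = Suc n" using depth_eq_0_iff by (cases "depth u") auto
  then have "(\<rho>, u) \<in> adj_rel T ^^ Suc n" using depth_path[OF u(1)] by simp
  then obtain p where p: "(\<rho>, p) \<in> adj_rel T ^^ n" "(p, u) \<in> adj_rel T"
    by (rule relpow_Suc_E)
  have "depth p + 1 = depth u" using depth_le[OF p(1)] depth_adj_le[OF p(2)] n by simp
  moreover obtain e where "e \<in> E T" "ends T e = (p, u) \<or> ends T e = (u, p)"
    using p(2) unfolding adj_rel_def by auto
  ultimately show ?thesis unfolding is_parent_def by blast
qed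

definition parent_edge :: "'tv \<Rightarrow> 'te" where
  "parent_edge u = (SOME e. \<exists>p. is_parent u e p)"

definition parent :: "'tv \<Rightarrow> 'tv" where
  "parent u = (if u = \<rho> then \<rho> else (SOME p. is_parent u (parent_edge u) p))"

lemma is_parent_parent: "u \<in> V T \<Longrightarrow> u \<noteq> \<rho> \<Longrightarrow> is_parent u (parent_edge u) (parent u)"
proof -
  assume u: "u \<in> V T" "u \<noteq> \<rho>"
  have "\<exists>p. is_parent u (parent_edge u) p"
    unfolding parent_edge_def using ex_parent[OF u] by (rule someI_ex)
  then show ?thesis unfolding parent_def using u(2) by (simp add: someI_ex)
qed

lemma parent_edge_E: "u \<in> V T \<Longrightarrow> u \<noteq> \<rho> \<Longrightarrow> parent_edge u \<in> E T"
  and depth_parent: "u \<in> V T \<Longrightarrow> u \<noteq> \<rho> \<Longrightarrow> depth (parent u) + 1 = depth u"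
  using is_parent_parent is_parent_def by blast+

lemma inj_on_parent_edge: "inj_on parent_edge (V T - {\<rho>})"
proof
  fix u u' assume u: "u \<in> V T - {\<rho>}" and u': "u' \<in> V T - {\<rho>}"
    and eq: "parent_edge u = parent_edge u'"
  show "u = u'"
  proof (rule ccontr)
    assume ne: "u \<noteq> u'"
    have "is_parent u (parent_edge u) (parent u)" using is_parent_parent u by blast
    moreover have "is_parent u' (parent_edge u) (parent u')" using is_parent_parent[of u'] u' eq by simp
    ultimately have "ends T (parent_edge u) = (parent u, u) \<or> ends T (parent_edge u) = (u, parent u)"
      "ends T (parent_edge u) = (parent u', u') \<or> ends T (parent_edge u) = (u', parent u')"
      unfolding is_parent_def by blast+
    then have "parent u' = u" "parent u = u'" using ne by auto
    moreover have "depth (parent u) + 1 = depth u" "depth (parent u') + 1 = depth u'"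
      using depth_parent u u' by auto
    ultimately show False by simp
  qed
qed

text \<open>Since \<open>|E| = |V| - 1\<close>, the injection \<open>parent_edge\<close> exhausts all edges.\<close>

lemma bij_parent_edge: "bij_betw parent_edge (V T - {\<rho>}) (E T)"
proof -
  have "parent_edge ` (V T - {\<rho>}) \<subseteq> E T" using parent_edge_E by blast
  moreover have "card (parent_edge ` (V T - {\<rho>})) = card (E T)"
    using card_image[OF inj_on_parent_edge] card_E_V root_V T.finite_V by simp
  ultimately have "parent_edge ` (V T - {\<rho>}) = E T" by (rule card_subset_eq[OF T.finite_E])
  then show ?thesis using inj_on_parent_edge unfolding bij_betw_def by simp
qed

definition lower_end :: "'te \<Rightarrow> 'tv" where
  "lower_end e = inv_into (V T - {\<rho>}) parent_edge e"

lemma lower_end: "e \<in> E T \<Longrightarrow> lower_end e \<in> V T \<and> lower_end e \<noteq> \<rho> \<and> parent_edge (lower_end e) = e"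
proof -
  assume "e \<in> E T"
  then have e: "e \<in> parent_edge ` (V T - {\<rho>})" using bij_parent_edge by (simp add: bij_betw_def)
  have "lower_end e \<in> V T - {\<rho>}" unfolding lower_end_def using e by (rule inv_into_into)
  moreover have "parent_edge (lower_end e) = e" unfolding lower_end_def using e by (rule f_inv_into_f)
  ultimately show ?thesis by simp
qed

lemma lower_end_parent_edge: "u \<in> V T \<Longrightarrow> u \<noteq> \<rho> \<Longrightarrow> lower_end (parent_edge u) = u"
  unfolding lower_end_def using inj_on_parent_edge by (simp add: inv_into_f_f)

lemma parent_root: "parent \<rho> = \<rho>"
  unfolding parent_def by simp

lemma parent_V: "u \<in> V T \<Longrightarrow> parent u \<in> V T"
proof (cases "u = \<rho>")
  case False
  assume u: "u \<in> V T"
  then have "ends T (parent_edge u) = (parent u, u) \<or> ends T (parent_edge u) = (u, parent u)"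
    using is_parent_parent False unfolding is_parent_def by blast
  then show ?thesis using T.edge_ends_V[OF parent_edge_E[OF u False]] by auto
qed (simp add: parent_root root_V)

lemma parent_neq: "u \<in> V T \<Longrightarrow> u \<noteq> \<rho> \<Longrightarrow> parent u \<noteq> u"
  using depth_parent[of u] by auto

lemma ends_edge: "e \<in> E T \<Longrightarrow>
    ends T e = (parent (lower_end e), lower_end e) \<or> ends T e = (lower_end e, parent (lower_end e))"
  using lower_end[of e] is_parent_parent[of "lower_end e"] unfolding is_parent_def by auto

lemma edge_not_loop: "e \<in> E T \<Longrightarrow> fst (ends T e) \<noteq> snd (ends T e)"
  using ends_edge[of e] lower_end[of e] parent_neq[of "lower_end e"] by auto

lemma inc_E: "e \<in> E T \<Longrightarrow> inc T u e = (if u = fst (ends T e) \<or> u = snd (ends T e) then 1 else 0)"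
  using T.inc_edge[of e u] edge_not_loop[of e] by auto

lemma adjacent_E_iff: "e \<in> E T \<Longrightarrow> adjacent T u e \<longleftrightarrow> u = lower_end e \<or> u = parent (lower_end e)"
  unfolding adjacent_def inc_def using ends_edge[of e] by auto

lemma adjacent_L_iff: "l \<in> L T \<Longrightarrow> adjacent T u l \<longleftrightarrow> fst (ends T l) = u"
  unfolding adjacent_def using T.inc_leg by simp

lemma adjacent_parent_edge: "u \<in> V T \<Longrightarrow> u \<noteq> \<rho> \<Longrightarrow>
    adjacent T u (parent_edge u) \<and> adjacent T (parent u) (parent_edge u)"
  using adjacent_E_iff parent_edge_E lower_end_parent_edge by simp

lemma iterated_parent: "u \<in> V T \<Longrightarrow> (parent ^^ k) u \<in> V T \<and> depth ((parent ^^ k) u) = depth u - k"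
proof (induction k)
  case (Suc k)
  have "depth (parent x) = depth x - 1" if "x \<in> V T" for x
    using depth_parent[OF that] parent_root depth_root by (cases "x = \<rho>") auto
  then show ?case using Suc parent_V by auto
qed simp

definition subtree :: "'tv \<Rightarrow> 'tv set" where
  "subtree u = {x \<in> V T. depth u \<le> depth x \<and> (parent ^^ (depth x - depth u)) x = u}"

definition children :: "'tv \<Rightarrow> 'tv set" where
  "children u = {c \<in> V T. c \<noteq> \<rho> \<and> parent c = u}"

lemma finite_subtree: "finite (subtree u)" and finite_children: "finite (children u)"
  unfolding subtree_def children_def using T.finite_V by simp_all

lemma depth_child: "c \<in> children u \<Longrightarrow> depth c = depth u + 1"
  unfolding children_def using depth_parent by auto

lemma subtree_children: "u \<in> V T \<Longrightarrow> subtree u = insert u (\<Union>c \<in> children u. subtree c)"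
proof (intro set_eqI iffI)
  fix x assume u: "u \<in> V T" and x: "x \<in> subtree u"
  show "x \<in> insert u (\<Union>c \<in> children u. subtree c)"
  proof (cases "x = u")
    case False
    have xV: "x \<in> V T" and le: "depth u \<le> depth x"
      and up: "(parent ^^ (depth x - depth u)) x = u"
      using x unfolding subtree_def by auto
    then obtain j where j: "depth x - depth u = Suc j" using False by (cases "depth x - depth u") auto
    define c where "c = (parent ^^ j) x"
    have c: "c \<in> V T" "depth c = depth u + 1" "parent c = u"
      using iterated_parent[OF xV, of j] j up unfolding c_def by auto
    then have "c \<in> children u" using depth_root unfolding children_def by auto
    moreover have "depth x - depth c = j" using c(2) j le by simp
    then have "x \<in> subtree c" using xV c(2) j le unfolding subtree_def c_def by simp
    ultimately show ?thesis by blast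
  qed (use u in \<open>simp add: subtree_def\<close>)
next
  fix x assume u: "u \<in> V T" and x: "x \<in> insert u (\<Union>c \<in> children u. subtree c)"
  show "x \<in> subtree u"
  proof (cases "x = u")
    case False
    then obtain c where c: "c \<in> children u" "x \<in> subtree c" using x by auto
    have xV: "x \<in> V T" and le: "depth c \<le> depth x"
      and up: "(parent ^^ (depth x - depth c)) x = c"
      using c(2) unfolding subtree_def by auto
    have "depth x - depth u = Suc (depth x - depth c)" using depth_child[OF c(1)] le by simp
    then have "(parent ^^ (depth x - depth u)) x = u"
      using up c(1) unfolding children_def by simp
    then show ?thesis using xV le depth_child[OF c(1)] unfolding subtree_def by simp
  qed (use u in \<open>simp add: subtree_def\<close>)
qed

lemma disjoint_subtrees: "c \<in> children u \<Longrightarrow> c' \<in> children u \<Longrightarrow> c \<noteq> c' \<Longrightarrow> subtree c \<inter> subtree c' = {}"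
  using depth_child[of c u] depth_child[of c' u] unfolding subtree_def by auto

lemma not_in_subtree_child: "c \<in> children u \<Longrightarrow> u \<notin> subtree c"
  using depth_child unfolding subtree_def by fastforce

lemma subtree_root: "subtree \<rho> = V T"
proof
  show "V T \<subseteq> subtree \<rho>"
  proof
    fix x assume x: "x \<in> V T"
    have "(parent ^^ depth x) x \<in> V T" "depth ((parent ^^ depth x) x) = 0"
      using iterated_parent[OF x, of "depth x"] by auto
    then have "(parent ^^ depth x) x = \<rho>" using depth_eq_0_iff by blast
    then show "x \<in> subtree \<rho>" using x depth_root unfolding subtree_def by simp
  qed
qed (auto simp: subtree_def)

lemma edges_at: "u \<in> V T \<Longrightarrow>
    {e \<in> E T. adjacent T u e} = (if u = \<rho> then {} else {parent_edge u}) \<union> parent_edge ` children u"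
proof (intro set_eqI iffI)
  fix e assume u: "u \<in> V T" and e: "e \<in> {e \<in> E T. adjacent T u e}"
  then have eE: "e \<in> E T" by simp
  have "u = lower_end e \<or> u = parent (lower_end e)" using e adjacent_E_iff by auto
  then show "e \<in> (if u = \<rho> then {} else {parent_edge u}) \<union> parent_edge ` children u"
  proof
    assume "u = lower_end e" then show ?thesis using lower_end[OF eE] by auto
  next
    assume "u = parent (lower_end e)"
    then have "lower_end e \<in> children u" using lower_end[OF eE] unfolding children_def by auto
    then show ?thesis using lower_end[OF eE] by (metis UnI2 image_eqI)
  qed
next
  fix e assume u: "u \<in> V T" and e: "e \<in> (if u = \<rho> then {} else {parent_edge u}) \<union> parent_edge ` children u"
  show "e \<in> {e \<in> E T. adjacent T u e}"
  proof (cases "e \<in> parent_edge ` children u")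
    case True
    then obtain c where c: "c \<in> V T" "c \<noteq> \<rho>" "parent c = u" "e = parent_edge c"
      unfolding children_def by auto
    then show ?thesis using adjacent_parent_edge[of c] parent_edge_E[of c] by simp
  next
    case False
    then show ?thesis using e u adjacent_parent_edge[of u] parent_edge_E[of u] by (auto split: if_splits)
  qed
qed

end

context rooted_tree
begin

definition legs_at :: "'tv \<Rightarrow> nat" where
  "legs_at x = card {l \<in> L T. fst (ends T l) = x}"

definition legs_below :: "'tv \<Rightarrow> nat" where
  "legs_below u = (\<Sum>x \<in> subtree u. legs_at x)"

lemma legs_below_children: "u \<in> V T \<Longrightarrow> legs_below u = legs_at u + (\<Sum>c \<in> children u. legs_below c)"
proof -
  assume u: "u \<in> V T"
  have "legs_below u = (\<Sum>x \<in> insert u (\<Union>c \<in> children u. subtree c). legs_at x)" unfolding legs_below_def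
    using subtree_children[OF u] by simp
  also have "\<dots> = legs_at u + (\<Sum>x \<in> (\<Union>c \<in> children u. subtree c). legs_at x)"
    using not_in_subtree_child finite_subtree finite_children by (subst sum.insert) auto
  also have "(\<Sum>x \<in> (\<Union>c \<in> children u. subtree c). legs_at x) = (\<Sum>c \<in> children u. legs_below c)"
    unfolding legs_below_def using finite_subtree finite_children disjoint_subtrees
      by (subst sum.UNION_disjoint) auto
  finally show ?thesis .
qed

lemma sum_legs_at: "(\<Sum>x \<in> V T. legs_at x) = card (L T)"
proof -
  have "L T = (\<Union>x \<in> V T. {l \<in> L T. fst (ends T l) = x})" using T.leg_end_V by auto
  moreover have "card (\<Union>x \<in> V T. {l \<in> L T. fst (ends T l) = x}) = (\<Sum>x \<in> V T. card {l \<in> L T. fst (ends T l) = x})"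
    by (rule card_UN_disjoint) (auto simp: T.finite_V T.finite_L)
  ultimately have "card (L T) = (\<Sum>x \<in> V T. card {l \<in> L T. fst (ends T l) = x})"
    by simp
  then show ?thesis unfolding legs_at_def by simp
qed

lemma legs_below_root: "legs_below \<rho> = card (L T)"
  unfolding legs_below_def subtree_root by (rule sum_legs_at)

text \<open>The odd edges will turn out to be exactly the edges over which a cover branched at all
  legs is ramified.\<close>

definition odd_edge :: "'te \<Rightarrow> bool" where
  "odd_edge e \<longleftrightarrow> odd (legs_below (lower_end e))"

definition branch_count :: "'tv \<Rightarrow> nat" where
  "branch_count u = card {e \<in> E T. adjacent T u e \<and> odd_edge e} + legs_at u"

lemma odd_edges_at: "u \<in> V T \<Longrightarrow> card {e \<in> E T. adjacent T u e \<and> odd_edge e} =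
    (if u = \<rho> \<or> even (legs_below u) then 0 else 1) + card {c \<in> children u. odd (legs_below c)}"
proof -
  assume u: "u \<in> V T"
  have odd_child_edge: "odd_edge (parent_edge c) \<longleftrightarrow> odd (legs_below c)" if "c \<in> children u" for c
    using that lower_end_parent_edge unfolding children_def odd_edge_def by auto
  have inj: "inj_on parent_edge (children u)"
    using inj_on_parent_edge by (rule inj_on_subset) (auto simp: children_def)
  have "{e \<in> E T. adjacent T u e \<and> odd_edge e} =
      {e \<in> (if u = \<rho> then {} else {parent_edge u}) \<union> parent_edge ` children u. odd_edge e}"
    using edges_at[OF u] by blast
  also have "\<dots> = (if u = \<rho> \<or> \<not> odd_edge (parent_edge u) then {} else {parent_edge u}) \<union>
      parent_edge ` {c \<in> children u. odd_edge (parent_edge c)}"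
    by auto
  also have "\<dots> = (if u = \<rho> \<or> even (legs_below u) then {} else {parent_edge u}) \<union>
      parent_edge ` {c \<in> children u. odd (legs_below c)}"
    using odd_child_edge lower_end_parent_edge[OF u] unfolding odd_edge_def by (auto cong: Collect_cong)
  finally have edges: "{e \<in> E T. adjacent T u e \<and> odd_edge e} = \<dots>" .
  have "u \<noteq> \<rho> \<Longrightarrow> parent_edge u \<notin> parent_edge ` children u"
    using inj_on_parent_edge u parent_neq unfolding inj_on_def children_def by fastforce
  then show ?thesis unfolding edges
    using card_image[OF inj_on_subset[OF inj]] finite_children by (auto simp: card_insert_if)
qed

lemma even_branch_count: "even (card (L T)) \<Longrightarrow> u \<in> V T \<Longrightarrow> even (branch_count u)"
  using odd_edges_at[of u] legs_below_children[of u] legs_below_root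
    even_card_odd_iff_even_sum[OF finite_children, of u legs_below]
  unfolding branch_count_def by (cases "u = \<rho>") auto

lemma card_vertices_at_edge: "e \<in> E T \<Longrightarrow> card {u \<in> V T. adjacent T u e} = 2"
proof -
  assume e: "e \<in> E T"
  have "{u \<in> V T. adjacent T u e} = {lower_end e, parent (lower_end e)}"
    using adjacent_E_iff[OF e] lower_end[OF e] parent_V by auto
  moreover have "parent (lower_end e) \<noteq> lower_end e" using parent_neq lower_end[OF e] by blast
  ultimately show ?thesis by simp
qed

lemma handshake: "(\<Sum>u \<in> V T. card {e \<in> E T. adjacent T u e \<and> P e}) = 2 * card {e \<in> E T. P e}"
proof -
  have "(\<Sum>u \<in> V T. card {e \<in> E T. adjacent T u e \<and> P e}) =
        (\<Sum>u \<in> V T. \<Sum>e \<in> E T. if adjacent T u e \<and> P e then 1 else 0)"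
    using T.finite_E by (simp add: card_filter_eq_sum)
  also have "\<dots> = (\<Sum>e \<in> E T. \<Sum>u \<in> V T. if adjacent T u e \<and> P e then 1 else 0)"
    by (rule sum.swap)
  also have "\<dots> = (\<Sum>e \<in> E T. if P e then 2 else 0)"
  proof (rule sum.cong)
    fix e assume e: "e \<in> E T"
    have "(\<Sum>u \<in> V T. if adjacent T u e \<and> P e then 1 else 0) =
          (if P e then card {u \<in> V T. adjacent T u e} else 0)"
      using T.finite_V by (simp add: card_filter_eq_sum)
    then show "(\<Sum>u \<in> V T. if adjacent T u e \<and> P e then 1 else (0::nat)) = (if P e then 2 else 0)"
      using card_vertices_at_edge[OF e] by simp
  qed simp
  also have "\<dots> = 2 * card {e \<in> E T. P e}"
    unfolding card_filter_eq_sum[OF T.finite_E] sum_distrib_left by (rule sum.cong) auto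
  finally show ?thesis .
qed

lemma sum_branch_count: "(\<Sum>u \<in> V T. branch_count u) = 2 * card {e \<in> E T. odd_edge e} + card (L T)"
  unfolding branch_count_def using handshake[of odd_edge] sum_legs_at by (simp add: sum.distrib)

end

section \<open>The canonical double cover\<close>

context rooted_tree
begin

definition ramified :: "'tv \<Rightarrow> bool" where
  "ramified u \<longleftrightarrow> branch_count u > 0"

definition sheet_vertex :: "'tv \<Rightarrow> bool \<Rightarrow> 'tv \<times> bool" where
  "sheet_vertex u b = (u, b \<and> \<not> ramified u)"

definition can_weight :: "'te \<times> bool \<Rightarrow> nat" where
  "can_weight x = (if fst x \<in> E T \<and> \<not> odd_edge (fst x) then 1 else 2)"

definition can_cover :: "('tv \<times> bool, 'te \<times> bool) mgraph" where
  "can_cover = \<lparr> V = {(u,b). u \<in> V T \<and> (b \<longrightarrow> \<not> ramified u)},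
           E = {(e,b). e \<in> E T \<and> (b \<longrightarrow> \<not> odd_edge e)},
           L = {(l,b). l \<in> L T \<and> \<not> b},
           ends = (\<lambda>(e,b). (sheet_vertex (fst (ends T e)) b, sheet_vertex (snd (ends T e)) b)),
           len = (\<lambda>x. len T (fst x) / real (can_weight x)),
           gen = (\<lambda>(u,b). (branch_count u - 2) div 2) \<rparr>"

lemma can_cover_simps:
  "V can_cover = {(u,b). u \<in> V T \<and> (b \<longrightarrow> \<not> ramified u)}"
  "E can_cover = {(e,b). e \<in> E T \<and> (b \<longrightarrow> \<not> odd_edge e)}"
  "L can_cover = {(l,b). l \<in> L T \<and> \<not> b}"
  "ends can_cover (e,b) = (sheet_vertex (fst (ends T e)) b, sheet_vertex (snd (ends T e)) b)"
  "len can_cover x = len T (fst x) / real (can_weight x)"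
  "gen can_cover (u,b) = (branch_count u - 2) div 2"
  unfolding can_cover_def by auto

lemma ramified_if_odd_edge: "e \<in> E T \<Longrightarrow> odd_edge e \<Longrightarrow> adjacent T u e \<Longrightarrow> ramified u"
proof -
  assume e: "e \<in> E T" "odd_edge e" "adjacent T u e"
  have "e \<in> {e \<in> E T. adjacent T u e \<and> odd_edge e}" using e by simp
  then have "card {e \<in> E T. adjacent T u e \<and> odd_edge e} > 0" using T.finite_E by (auto simp: card_gt_0_iff)
  then show ?thesis unfolding ramified_def branch_count_def by simp
qed

lemma ramified_at_leg: "l \<in> L T \<Longrightarrow> ramified (fst (ends T l))"
proof -
  assume l: "l \<in> L T"
  have "l \<in> {l' \<in> L T. fst (ends T l') = fst (ends T l)}" using l by simp
  then have "legs_at (fst (ends T l)) > 0" unfolding legs_at_def using T.finite_L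
    by (auto simp: card_gt_0_iff)
  then show ?thesis unfolding ramified_def branch_count_def by simp
qed

lemma finite_can_cover: "finite (V can_cover)" "finite (E can_cover)" "finite (L can_cover)"
proof -
  have "V can_cover \<subseteq> V T \<times> UNIV" "E can_cover \<subseteq> E T \<times> UNIV" "L can_cover \<subseteq> L T \<times> UNIV"
    unfolding can_cover_simps by auto
  then show "finite (V can_cover)" "finite (E can_cover)" "finite (L can_cover)"
    using T.finite_V T.finite_E T.finite_L by (auto intro: finite_subset)
qed

lemma can_cover_edges_legs: "E can_cover \<union> L can_cover =
    (\<lambda>e. (e, False)) ` (E T \<union> L T) \<union> (\<lambda>e. (e, True)) ` {e \<in> E T. \<not> odd_edge e}"
  unfolding can_cover_simps by auto

lemma sum_can_cover_edges_legs: "(\<Sum>x \<in> E can_cover \<union> L can_cover. h x) =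
   (\<Sum>e \<in> E T \<union> L T. h (e, False)) + (\<Sum>e \<in> {e \<in> E T. \<not> odd_edge e}. h (e, True))"
proof -
  have "(\<Sum>x \<in> E can_cover \<union> L can_cover. h x) =
     (\<Sum>x \<in> (\<lambda>e. (e, False)) ` (E T \<union> L T). h x) + (\<Sum>x \<in> (\<lambda>e. (e, True)) ` {e \<in> E T. \<not> odd_edge e}. h x)"
    unfolding can_cover_edges_legs by (rule sum.union_disjoint) (auto simp: T.finite_E T.finite_L)
  also have "(\<Sum>x \<in> (\<lambda>e. (e, False)) ` (E T \<union> L T). h x) = (\<Sum>e \<in> E T \<union> L T. h (e, False))"
    by (subst sum.reindex) (auto simp: inj_on_def)
  also have "(\<Sum>x \<in> (\<lambda>e. (e, True)) ` {e \<in> E T. \<not> odd_edge e}. h x) = (\<Sum>e \<in> {e \<in> E T. \<not> odd_edge e}. h (e, True))"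
    by (subst sum.reindex) (auto simp: inj_on_def)
  finally show ?thesis .
qed

lemma inc_can_cover_edge: "e \<in> E T \<Longrightarrow> (b \<longrightarrow> \<not> odd_edge e) \<Longrightarrow>
   inc can_cover (u, bv) (e, b) = (if adjacent T u e \<and> bv = (b \<and> \<not> ramified u) then 1 else 0)"
proof -
  assume e: "e \<in> E T" and b: "b \<longrightarrow> \<not> odd_edge e"
  have eC: "(e, b) \<in> E can_cover" using e b unfolding can_cover_simps by simp
  have ne: "fst (ends T e) \<noteq> snd (ends T e)" using edge_not_loop[OF e] .
  have adj: "adjacent T u e \<longleftrightarrow> u = fst (ends T e) \<or> u = snd (ends T e)"
    unfolding adjacent_def using inc_E[OF e] by auto
  show ?thesis using eC ne adj unfolding inc_def can_cover_simps(4) sheet_vertex_def by auto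
qed

lemma inc_can_cover_leg: "l \<in> L T \<Longrightarrow> inc can_cover (u, bv) (l, False) = (if fst (ends T l) = u \<and> \<not> bv then 1 else 0)"
proof -
  assume l: "l \<in> L T"
  have "(l, False) \<notin> E can_cover" using l T.E_L_disjoint unfolding can_cover_simps by auto
  moreover have "(l, False) \<in> L can_cover" using l unfolding can_cover_simps by simp
  ultimately show ?thesis unfolding inc_def can_cover_simps(4) sheet_vertex_def by auto
qed

lemma local_deg_can_cover: "(u, bv) \<in> V can_cover \<Longrightarrow> e' \<in> E T \<union> L T \<Longrightarrow> adjacent T u e' \<Longrightarrow>
   local_deg can_cover fst can_weight (u, bv) e' = (if ramified u then 2 else 1)"
proof -
  assume v: "(u, bv) \<in> V can_cover" and e': "e' \<in> E T \<union> L T" and adj: "adjacent T u e'"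
  have bvb: "bv \<longrightarrow> \<not> ramified u" using v unfolding can_cover_simps by simp
  have "local_deg can_cover fst can_weight (u, bv) e' =
     (\<Sum>e \<in> E T \<union> L T. if e = e' then inc can_cover (u, bv) (e, False) * can_weight (e, False) else 0) +
     (\<Sum>e \<in> {e \<in> E T. \<not> odd_edge e}. if e = e' then inc can_cover (u, bv) (e, True) * can_weight (e, True) else 0)"
    unfolding local_deg_def by (subst sum_can_cover_edges_legs) simp
  also have "\<dots> = inc can_cover (u, bv) (e', False) * can_weight (e', False) +
       (if e' \<in> E T \<and> \<not> odd_edge e' then inc can_cover (u, bv) (e', True) * can_weight (e', True) else 0)"
    using e' T.finite_E T.finite_L by (simp add: sum.delta)
  also have "\<dots> = (if ramified u then 2 else 1)"
  proof (cases "e' \<in> E T")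
    case True
    show ?thesis
    proof (cases "odd_edge e'")
      case True
      then have "ramified u" using ramified_if_odd_edge \<open>e' \<in> E T\<close> adj by blast
      then show ?thesis using inc_can_cover_edge[OF \<open>e' \<in> E T\<close>, of False u bv] adj True bvb \<open>e' \<in> E T\<close>
        unfolding can_weight_def by auto
    next
      case False
      then show ?thesis
        using inc_can_cover_edge[OF \<open>e' \<in> E T\<close>, of False u bv] inc_can_cover_edge[OF \<open>e' \<in> E T\<close>, of True u bv]
          adj bvb \<open>e' \<in> E T\<close> unfolding can_weight_def by auto
    qed
  next
    case False
    then have l: "e' \<in> L T" using e' by simp
    then have "fst (ends T e') = u" using adj adjacent_L_iff by blast
    then have "ramified u" using ramified_at_leg l by blast
    then show ?thesis using inc_can_cover_leg[OF l, of u bv] False bvb \<open>fst (ends T e') = u\<close>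
      unfolding can_weight_def by auto
  qed
  finally show ?thesis .
qed

lemma weight2_inc_sum_can_cover: "(u, bv) \<in> V can_cover \<Longrightarrow>
   (\<Sum>x \<in> E can_cover \<union> L can_cover. if can_weight x = 2 then inc can_cover (u, bv) x else 0) = branch_count u"
proof -
  assume v: "(u, bv) \<in> V can_cover"
  have bvb: "bv \<longrightarrow> \<not> ramified u" using v unfolding can_cover_simps by simp
  have "(\<Sum>x \<in> E can_cover \<union> L can_cover. if can_weight x = 2 then inc can_cover (u, bv) x else 0) =
     (\<Sum>e \<in> E T \<union> L T. if can_weight (e, False) = 2 then inc can_cover (u, bv) (e, False) else 0) +
     (\<Sum>e \<in> {e \<in> E T. \<not> odd_edge e}. if can_weight (e, True) = 2 then inc can_cover (u, bv) (e, True) else 0)"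
    by (rule sum_can_cover_edges_legs)
  also have "(\<Sum>e \<in> {e \<in> E T. \<not> odd_edge e}. if can_weight (e, True) = 2 then inc can_cover (u, bv) (e, True) else 0) = 0"
    unfolding can_weight_def by simp
  also have "(\<Sum>e \<in> E T \<union> L T. if can_weight (e, False) = 2 then inc can_cover (u, bv) (e, False) else 0) =
     (\<Sum>e \<in> E T. if can_weight (e, False) = 2 then inc can_cover (u, bv) (e, False) else 0) +
     (\<Sum>e \<in> L T. if can_weight (e, False) = 2 then inc can_cover (u, bv) (e, False) else 0)"
    using T.E_L_disjoint T.finite_E T.finite_L by (simp add: sum.union_disjoint)
  also have "(\<Sum>e \<in> E T. if can_weight (e, False) = 2 then inc can_cover (u, bv) (e, False) else 0) =
      (\<Sum>e \<in> E T. if adjacent T u e \<and> odd_edge e then 1 else 0)"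
  proof (rule sum.cong)
    fix e assume e: "e \<in> E T"
    show "(if can_weight (e, False) = 2 then inc can_cover (u, bv) (e, False) else 0) =
        (if adjacent T u e \<and> odd_edge e then 1 else 0)"
      using inc_can_cover_edge[OF e, of False u bv] bvb ramified_if_odd_edge[OF e] e unfolding can_weight_def
        by auto
  qed simp
  also have "\<dots> = card {e \<in> E T. adjacent T u e \<and> odd_edge e}" using card_filter_eq_sum[OF T.finite_E] by simp
  also have "(\<Sum>e \<in> L T. if can_weight (e, False) = 2 then inc can_cover (u, bv) (e, False) else 0) =
      (\<Sum>e \<in> L T. if fst (ends T e) = u then 1 else 0)"
  proof (rule sum.cong)
    fix e assume e: "e \<in> L T"
    then have "e \<notin> E T" using T.E_L_disjoint by auto
    then show "(if can_weight (e, False) = 2 then inc can_cover (u, bv) (e, False) else 0) =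
        (if fst (ends T e) = u then 1 else 0)"
      using inc_can_cover_leg[OF e, of u bv] bvb ramified_at_leg[OF e] unfolding can_weight_def by auto
  qed simp
  also have "\<dots> = legs_at u" unfolding legs_at_def using card_filter_eq_sum[OF T.finite_L] by simp
  finally show ?thesis unfolding branch_count_def by simp
qed

end

locale leg_rooted_tree = rooted_tree +
  assumes leg_at_root: "\<exists>l \<in> L T. fst (ends T l) = \<rho>"
    and even_legs: "even (card (L T))"
begin

lemma ramified_root: "ramified \<rho>"
  using leg_at_root ramified_at_leg by blast

lemma twice_vertex_genus: "u \<in> V T \<Longrightarrow>
    2 * int ((branch_count u - 2) div 2) = int (branch_count u) - (if ramified u then 2 else 0)"
proof -
  assume u: "u \<in> V T"
  obtain k where k: "branch_count u = 2 * k" using even_branch_count[OF even_legs u] by blast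
  show ?thesis
  proof (cases "ramified u")
    case True
    then have "k \<ge> 1" using k unfolding ramified_def by simp
    then have "(branch_count u - 2) div 2 = k - 1" using k by simp
    then show ?thesis using k True \<open>k \<ge> 1\<close> by (simp add: of_nat_diff)
  qed (use k in \<open>simp add: ramified_def\<close>)
qed

lemma sheet_vertex_adj: "(a, c) \<in> adj_rel T \<Longrightarrow> (sheet_vertex a b, sheet_vertex c b) \<in> adj_rel can_cover"
proof -
  assume "(a, c) \<in> adj_rel T"
  then obtain e where e: "e \<in> E T" "ends T e = (a, c) \<or> ends T e = (c, a)" unfolding adj_rel_def by auto
  define b' where "b' = (b \<and> \<not> odd_edge e)"
  have "ramified a" "ramified c" if "odd_edge e"
    using ramified_if_odd_edge[OF e(1) that] e unfolding adjacent_def inc_def by auto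
  then have "sheet_vertex a b' = sheet_vertex a b" "sheet_vertex c b' = sheet_vertex c b"
    unfolding b'_def sheet_vertex_def by auto
  then have "ends can_cover (e, b') = (sheet_vertex a b, sheet_vertex c b) \<or>
      ends can_cover (e, b') = (sheet_vertex c b, sheet_vertex a b)"
    using e(2) unfolding can_cover_simps by auto
  moreover have "(e, b') \<in> E can_cover" using e unfolding b'_def can_cover_simps by simp
  ultimately show ?thesis unfolding adj_rel_def by blast
qed

lemma sheet_vertex_rtrancl: "(a, c) \<in> (adj_rel T)\<^sup>* \<Longrightarrow> (sheet_vertex a b, sheet_vertex c b) \<in> (adj_rel can_cover)\<^sup>*"
  by (induction rule: rtrancl_induct) (use sheet_vertex_adj in \<open>auto intro: rtrancl_into_rtrancl\<close>)

lemma can_cover_reachable_from_root: "x \<in> V can_cover \<Longrightarrow> ((\<rho>, False), x) \<in> (adj_rel can_cover)\<^sup>*"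
proof -
  assume x: "x \<in> V can_cover"
  then obtain u b where u: "u \<in> V T" and "x = sheet_vertex u b"
    unfolding can_cover_simps sheet_vertex_def by auto
  moreover have "(\<rho>, False) = sheet_vertex \<rho> b" using ramified_root unfolding sheet_vertex_def by simp
  ultimately show ?thesis using sheet_vertex_rtrancl T.connected[OF root_V u] by simp
qed

lemma metric_graph_can_cover: "metric_graph can_cover"
  unfolding metric_graph_def
proof (intro conjI ballI)
  show "finite (V can_cover)" "finite (E can_cover)" "finite (L can_cover)"
    by (fact finite_can_cover)+
  show "V can_cover \<noteq> {}" using root_V unfolding can_cover_simps by auto
  show "E can_cover \<inter> L can_cover = {}" using T.E_L_disjoint unfolding can_cover_simps by auto
next
  fix x assume "x \<in> E can_cover"
  then obtain e b where e: "e \<in> E T" and x: "x = (e, b)" unfolding can_cover_simps by auto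
  have "sheet_vertex a b \<in> V can_cover" if "a \<in> V T" for a
    using that unfolding sheet_vertex_def can_cover_simps by auto
  then show "fst (ends can_cover x) \<in> V can_cover" "snd (ends can_cover x) \<in> V can_cover"
    using T.edge_ends_V[OF e] unfolding x can_cover_simps by auto
  show "len can_cover x > 0"
    using T.edge_len_pos[OF e] unfolding x can_cover_simps can_weight_def by simp
next
  fix x assume "x \<in> L can_cover"
  then show "fst (ends can_cover x) \<in> V can_cover"
    using T.leg_end_V by (auto simp: can_cover_simps sheet_vertex_def)
next
  fix x y assume "x \<in> V can_cover" "y \<in> V can_cover"
  then have "((\<rho>, False), x) \<in> (adj_rel can_cover)\<^sup>*" "((\<rho>, False), y) \<in> (adj_rel can_cover)\<^sup>*"
    using can_cover_reachable_from_root by blast+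
  then show "(x, y) \<in> (adj_rel can_cover)\<^sup>*"
    using symD[OF sym_rtrancl[OF sym_adj_rel]] rtrancl_trans by metis
qed

lemma morphism_can_cover: "morphism can_cover T fst fst can_weight"
  unfolding morphism_def
proof (intro conjI ballI)
  fix x assume "x \<in> E can_cover"
  then obtain e b where "e \<in> E T" "x = (e, b)" unfolding can_cover_simps by auto
  then show "fst x \<in> E T" "can_weight x > 0"
    "{#fst (fst (ends can_cover x)), fst (snd (ends can_cover x))#} = {#fst (ends T (fst x)), snd (ends T (fst x))#}"
    "len T (fst x) = real (can_weight x) * len can_cover x"
    by (auto simp: can_cover_simps can_weight_def sheet_vertex_def)
qed (auto simp: can_cover_simps can_weight_def sheet_vertex_def)

lemma harmonic_can_cover: "harmonic can_cover T fst fst can_weight"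
  unfolding harmonic_def using morphism_can_cover local_deg_can_cover by auto

lemma surjective_can_cover: "surjective_mor can_cover T fst fst"
  unfolding surjective_mor_def can_cover_simps
  by (auto intro!: image_eqI[where x = "(_, False)"])

lemma fibre_can_cover: "u \<in> V T \<Longrightarrow>
    {v \<in> V can_cover. fst v = u} = (if ramified u then {(u, False)} else {(u, False), (u, True)})"
  unfolding can_cover_simps by auto

lemma degree_can_cover: "has_degree can_cover T fst fst can_weight 2"
  unfolding has_degree_def
proof (intro ballI impI)
  fix u e' assume u: "u \<in> V T" and e': "e' \<in> E T \<union> L T" and a: "adjacent T u e'"
  have "(u, b) \<in> V can_cover \<Longrightarrow> local_deg can_cover fst can_weight (u, b) e' = (if ramified u then 2 else 1)" for b
    using local_deg_can_cover e' a by blast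
  then show "(\<Sum>v \<in> {v \<in> V can_cover. fst v = u}. local_deg can_cover fst can_weight v e') = 2"
    unfolding fibre_can_cover[OF u] using u by (simp add: can_cover_simps)
qed

lemma riemann_hurwitz_can_cover: "v \<in> V can_cover \<Longrightarrow> e' \<in> E T \<union> L T \<Longrightarrow> adjacent T (fst v) e' \<Longrightarrow>
    2 - 2 * int (gen can_cover v) = 2 * int (local_deg can_cover fst can_weight v e') -
      int (\<Sum>x \<in> E can_cover \<union> L can_cover. if can_weight x = 2 then inc can_cover v x else 0)"
proof -
  assume v: "v \<in> V can_cover" and e': "e' \<in> E T \<union> L T" and a: "adjacent T (fst v) e'"
  obtain u b where ub: "v = (u, b)" and u: "u \<in> V T" using v unfolding can_cover_simps by auto
  show ?thesis unfolding ub
    using local_deg_can_cover[of u b e'] weight2_inc_sum_can_cover[of u b] twice_vertex_genus[OF u]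
      v e' a ub by (simp add: can_cover_simps(6))
qed

lemma hyperelliptic_can_cover: "hyperelliptic_cover can_cover T fst fst can_weight"
  unfolding hyperelliptic_cover_def
  using metric_graph_can_cover genus0_tree harmonic_can_cover surjective_can_cover degree_can_cover
    riemann_hurwitz_can_cover by blast

lemma card_E_can_cover: "card (E can_cover) = card (E T) + card {e \<in> E T. \<not> odd_edge e}"
  unfolding can_cover_simps using card_two_sheets[OF T.finite_E, of "{e \<in> E T. \<not> odd_edge e}"]
  by (simp add: conj_commute cong: conj_cong)

lemma card_V_can_cover: "card (V can_cover) = card (V T) + card {u \<in> V T. \<not> ramified u}"
  unfolding can_cover_simps using card_two_sheets[OF T.finite_V, of "{u \<in> V T. \<not> ramified u}"]
  by (simp add: conj_commute cong: conj_cong)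

lemma twice_sum_gen_can_cover: "2 * (\<Sum>v \<in> V can_cover. int (gen can_cover v)) =
    int (card (L T)) + 2 * int (card {e \<in> E T. odd_edge e}) - 2 * int (card {u \<in> V T. ramified u})"
proof -
  let ?N = "{u \<in> V T. \<not> ramified u}"
  have "V can_cover = (\<lambda>u. (u, False)) ` V T \<union> (\<lambda>u. (u, True)) ` ?N"
    unfolding can_cover_simps by auto
  then have "(\<Sum>v \<in> V can_cover. int (gen can_cover v)) =
      (\<Sum>v \<in> (\<lambda>u. (u, False)) ` V T. int (gen can_cover v)) + (\<Sum>v \<in> (\<lambda>u. (u, True)) ` ?N. int (gen can_cover v))"
    by (simp only:) (rule sum.union_disjoint, auto simp: T.finite_V)
  also have "(\<Sum>v \<in> (\<lambda>u. (u, True)) ` ?N. int (gen can_cover v)) = 0"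
    by (rule sum.neutral) (auto simp: can_cover_simps ramified_def)
  also have "(\<Sum>v \<in> (\<lambda>u. (u, False)) ` V T. int (gen can_cover v)) = (\<Sum>u \<in> V T. int (gen can_cover (u, False)))"
    by (subst sum.reindex) (auto simp: inj_on_def)
  finally have "(\<Sum>v \<in> V can_cover. int (gen can_cover v)) = (\<Sum>u \<in> V T. int (gen can_cover (u, False)))"
    by simp
  also have "2 * \<dots> = (\<Sum>u \<in> V T. int (branch_count u) - (if ramified u then 2 else 0))"
    by (simp add: sum_distrib_left twice_vertex_genus can_cover_simps)
  also have "\<dots> = int (\<Sum>u \<in> V T. branch_count u) - (\<Sum>u \<in> V T. if ramified u then 2 else 0)"
    by (simp add: sum_subtractf of_nat_sum)
  also have "(\<Sum>u \<in> V T. if ramified u then 2 else 0) = 2 * int (card {u \<in> V T. ramified u})"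
    unfolding card_filter_eq_sum[OF T.finite_V] of_nat_sum sum_distrib_left by (rule sum.cong) auto
  finally show ?thesis using sum_branch_count by simp
qed

lemma genus_can_cover: "2 * graph_genus can_cover = int (card (L T)) - 2"
proof -
  have "int (card {u \<in> V T. ramified u}) + int (card {u \<in> V T. \<not> ramified u}) = int (card (V T))"
    "int (card {e \<in> E T. odd_edge e}) + int (card {e \<in> E T. \<not> odd_edge e}) = int (card (E T))"
    "int (card (E T)) + 1 = int (card (V T))"
    using card_filter_add_card_filter_not[OF T.finite_V] card_filter_add_card_filter_not[OF T.finite_E]
      card_E_V by (metis of_nat_add of_nat_1)+
  then show ?thesis
    using twice_sum_gen_can_cover
    unfolding graph_genus_def card_E_can_cover card_V_can_cover of_nat_add by arith
qed

lemma card_L_can_cover: "card (L can_cover) = card (L T)"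
proof -
  have "L can_cover = (\<lambda>l. (l, False)) ` L T" unfolding can_cover_simps by auto
  then show ?thesis by (simp add: card_image inj_on_def)
qed

lemma branch_point_can_cover: "l \<in> L T \<Longrightarrow> branch_point can_cover fst can_weight l"
  unfolding branch_point_def using T.E_L_disjoint
  by (intro bexI[where x = "(l, False)"]) (auto simp: can_cover_simps can_weight_def)

end

section \<open>Relabelling the vertices and edges of a metric graph by natural numbers\<close>

locale relabelling = wf_mgraph G for G :: "('v, 'e) mgraph" +
  fixes iv :: "'v \<Rightarrow> nat" and ie :: "'e \<Rightarrow> nat"
  assumes inj_iv: "inj_on iv (V G)" and inj_ie: "inj_on ie (E G \<union> L G)"
begin

definition jV :: "nat \<Rightarrow> 'v" where "jV = inv_into (V G) iv"
definition jE :: "nat \<Rightarrow> 'e" where "jE = inv_into (E G \<union> L G) ie"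

definition relabelled :: "(nat, nat) mgraph" where
  "relabelled = \<lparr> V = iv ` V G, E = ie ` E G, L = ie ` L G,
     ends = (\<lambda>n. map_prod iv iv (ends G (jE n))),
     len = (\<lambda>n. len G (jE n)), gen = (\<lambda>n. gen G (jV n)) \<rparr>"

lemma relabelled_simps:
  "V relabelled = iv ` V G" "E relabelled = ie ` E G" "L relabelled = ie ` L G"
  "ends relabelled n = map_prod iv iv (ends G (jE n))"
  "len relabelled n = len G (jE n)" "gen relabelled n = gen G (jV n)"
  unfolding relabelled_def by simp_all

lemma jV_iv [simp]: "v \<in> V G \<Longrightarrow> jV (iv v) = v"
  unfolding jV_def using inj_iv by (simp add: inv_into_f_f)

lemma jE_ie [simp]: "x \<in> E G \<union> L G \<Longrightarrow> jE (ie x) = x"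
  unfolding jE_def using inj_ie by (simp add: inv_into_f_f)

lemma ie_in_E_iff: "x \<in> E G \<union> L G \<Longrightarrow> ie x \<in> ie ` E G \<longleftrightarrow> x \<in> E G"
  and ie_in_L_iff: "x \<in> E G \<union> L G \<Longrightarrow> ie x \<in> ie ` L G \<longleftrightarrow> x \<in> L G"
  using inj_ie by (auto dest: inj_onD)

lemma iv_eq_iff: "a \<in> V G \<Longrightarrow> b \<in> V G \<Longrightarrow> iv a = iv b \<longleftrightarrow> a = b"
  using inj_iv by (auto dest: inj_onD)

lemma inc_relabelled: "v \<in> V G \<Longrightarrow> x \<in> E G \<union> L G \<Longrightarrow> inc relabelled (iv v) (ie x) = inc G v x"
proof -
  assume v: "v \<in> V G" and x: "x \<in> E G \<union> L G"
  show ?thesis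
  proof (cases "x \<in> E G")
    case True
    then show ?thesis unfolding inc_def relabelled_simps
      using ie_in_E_iff[OF x] edge_ends_V[OF True] v iv_eq_iff
      by (simp add: map_prod_def split_beta)
  next
    case False
    then have l: "x \<in> L G" using x by simp
    then show ?thesis
      unfolding inc_def relabelled_simps
        using ie_in_E_iff[OF x] ie_in_L_iff[OF x] False leg_end_V[OF l] v iv_eq_iff
      by (simp add: map_prod_def split_beta)
  qed
qed

lemma sum_edges_legs_relabelled: "(\<Sum>y \<in> E relabelled \<union> L relabelled. f y) = (\<Sum>x \<in> E G \<union> L G. f (ie x))"
proof -
  have "E relabelled \<union> L relabelled = ie ` (E G \<union> L G)" unfolding relabelled_simps by auto
  then show ?thesis using inj_ie by (simp add: sum.reindex)
qed

lemma local_deg_relabelled: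
  "v \<in> V G \<Longrightarrow> local_deg relabelled (pE \<circ> jE) (w \<circ> jE) (iv v) e' = local_deg G pE w v e'"
  unfolding local_deg_def sum_edges_legs_relabelled using inc_relabelled by (intro sum.cong) auto

lemma weight2_inc_sum_relabelled: "v \<in> V G \<Longrightarrow>
    (\<Sum>y \<in> E relabelled \<union> L relabelled. if (w \<circ> jE) y = 2 then inc relabelled (iv v) y else 0) =
    (\<Sum>x \<in> E G \<union> L G. if w x = 2 then inc G v x else 0)"
  unfolding sum_edges_legs_relabelled using inc_relabelled by (intro sum.cong) auto

lemma adj_rel_relabelled: "(a, b) \<in> adj_rel G \<Longrightarrow> (iv a, iv b) \<in> adj_rel relabelled"
proof -
  assume "(a, b) \<in> adj_rel G"
  then obtain e where e: "e \<in> E G" "ends G e = (a, b) \<or> ends G e = (b, a)" unfolding adj_rel_def by auto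
  then have "ie e \<in> E relabelled"
    "ends relabelled (ie e) = (iv a, iv b) \<or> ends relabelled (ie e) = (iv b, iv a)"
    unfolding relabelled_simps by auto
  then show ?thesis unfolding adj_rel_def by blast
qed

lemma metric_graph_relabelled: "metric_graph relabelled"
  unfolding metric_graph_def
proof (intro conjI ballI)
  show "finite (V relabelled)" "finite (E relabelled)" "finite (L relabelled)" "V relabelled \<noteq> {}"
    using finite_V finite_E finite_L V_nonempty unfolding relabelled_simps by auto
  show "E relabelled \<inter> L relabelled = {}" using E_L_disjoint inj_ie unfolding relabelled_simps
    by (auto dest: inj_onD)
next
  fix y assume "y \<in> E relabelled"
  then obtain x where x: "x \<in> E G" "y = ie x" unfolding relabelled_simps by auto
  then show "fst (ends relabelled y) \<in> V relabelled" "snd (ends relabelled y) \<in> V relabelled" "len relabelled y > 0"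
    using edge_ends_V[OF x(1)] edge_len_pos[OF x(1)] unfolding relabelled_simps by auto
next
  fix y assume "y \<in> L relabelled"
  then obtain x where x: "x \<in> L G" "y = ie x" unfolding relabelled_simps by auto
  then show "fst (ends relabelled y) \<in> V relabelled" using leg_end_V[OF x(1)] unfolding relabelled_simps
    by auto
next
  fix a b assume "a \<in> V relabelled" "b \<in> V relabelled"
  then obtain a0 b0 where "a0 \<in> V G" "b0 \<in> V G" "a = iv a0" "b = iv b0" unfolding relabelled_simps by auto
  moreover have "(iv a0, iv b0) \<in> (adj_rel relabelled)\<^sup>*" if "(a0, b0) \<in> (adj_rel G)\<^sup>*"
    using that by (induction rule: rtrancl_induct) (use adj_rel_relabelled in \<open>auto intro: rtrancl_into_rtrancl\<close>)
  ultimately show "(a, b) \<in> (adj_rel relabelled)\<^sup>*" using connected by blast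
qed

lemma graph_genus_relabelled: "graph_genus relabelled = graph_genus G"
proof -
  have "card (E relabelled) = card (E G)" "card (V relabelled) = card (V G)"
    "(\<Sum>v \<in> V relabelled. int (gen relabelled v)) = (\<Sum>v \<in> V G. int (gen G v))"
    unfolding relabelled_simps using inj_ie inj_iv by (simp_all add: card_image inj_on_Un sum.reindex)
  then show ?thesis unfolding graph_genus_def by simp
qed

lemma card_L_relabelled: "card (L relabelled) = card (L G)"
  unfolding relabelled_simps using inj_ie by (simp add: card_image inj_on_Un)

lemma morphism_relabelled:
  assumes "morphism G H pV pE w"
  shows "morphism relabelled H (pV \<circ> jV) (pE \<circ> jE) (w \<circ> jE)"
  unfolding morphism_def
proof (intro conjI ballI)
  fix v assume "v \<in> V relabelled"
  then show "(pV \<circ> jV) v \<in> V H" using assms unfolding relabelled_simps morphism_def by auto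
next
  fix y assume "y \<in> E relabelled"
  then obtain x where x: "x \<in> E G" "y = ie x" unfolding relabelled_simps by auto
  show "(pE \<circ> jE) y \<in> E H" "(w \<circ> jE) y > 0" "len H ((pE \<circ> jE) y) = real ((w \<circ> jE) y) * len relabelled y"
    using x assms unfolding morphism_def relabelled_simps by auto
  show "{#(pV \<circ> jV) (fst (ends relabelled y)), (pV \<circ> jV) (snd (ends relabelled y))#} =
      {#fst (ends H ((pE \<circ> jE) y)), snd (ends H ((pE \<circ> jE) y))#}"
    using x assms edge_ends_V[OF x(1)] unfolding morphism_def relabelled_simps
    by (auto simp: map_prod_def split_beta)
next
  fix y assume "y \<in> L relabelled"
  then obtain x where x: "x \<in> L G" "y = ie x" unfolding relabelled_simps by auto
  show "(pE \<circ> jE) y \<in> L H" "(w \<circ> jE) y > 0" "(pV \<circ> jV) (fst (ends relabelled y)) = fst (ends H ((pE \<circ> jE) y))"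
    using x assms leg_end_V[OF x(1)] unfolding morphism_def relabelled_simps
      by (auto simp: map_prod_def split_beta)
qed

lemma harmonic_relabelled:
  assumes "harmonic G H pV pE w"
  shows "harmonic relabelled H (pV \<circ> jV) (pE \<circ> jE) (w \<circ> jE)"
  unfolding harmonic_def
proof (intro conjI ballI impI)
  show "morphism relabelled H (pV \<circ> jV) (pE \<circ> jE) (w \<circ> jE)"
    using assms morphism_relabelled unfolding harmonic_def by blast
next
  fix v e1 e2 assume v: "v \<in> V relabelled" and e: "e1 \<in> E H \<union> L H" "e2 \<in> E H \<union> L H"
    and a: "adjacent H ((pV \<circ> jV) v) e1" "adjacent H ((pV \<circ> jV) v) e2"
  obtain v0 where v0: "v0 \<in> V G" "v = iv v0" using v unfolding relabelled_simps by auto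
  have "adjacent H (pV v0) e1" "adjacent H (pV v0) e2" using a v0 by auto
  then have "local_deg G pE w v0 e1 = local_deg G pE w v0 e2"
    using assms e v0(1) unfolding harmonic_def by blast
  then show "local_deg relabelled (pE \<circ> jE) (w \<circ> jE) v e1 = local_deg relabelled (pE \<circ> jE) (w \<circ> jE) v e2"
    using local_deg_relabelled[OF v0(1), of pE w e1] local_deg_relabelled[OF v0(1), of pE w e2] v0(2)
    by simp
qed

lemma surjective_relabelled:
  assumes "surjective_mor G H pV pE"
  shows "surjective_mor relabelled H (pV \<circ> jV) (pE \<circ> jE)"
proof -
  have "(pV \<circ> jV) ` iv ` V G = pV ` V G" "(pE \<circ> jE) ` ie ` E G = pE ` E G" "(pE \<circ> jE) ` ie ` L G = pE ` L G"
    unfolding image_image by (rule image_cong; simp)+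
  then show ?thesis using assms unfolding surjective_mor_def relabelled_simps by simp
qed

lemma has_degree_relabelled:
  assumes "has_degree G H pV pE w n"
  shows "has_degree relabelled H (pV \<circ> jV) (pE \<circ> jE) (w \<circ> jE) n"
  unfolding has_degree_def
proof (intro ballI impI)
  fix u e' assume "u \<in> V H" "e' \<in> E H \<union> L H" "adjacent H u e'"
  have "{v \<in> V relabelled. (pV \<circ> jV) v = u} = iv ` {v \<in> V G. pV v = u}"
    unfolding relabelled_simps by auto
  moreover have "inj_on iv {v \<in> V G. pV v = u}" by (rule inj_on_subset[OF inj_iv]) auto
  ultimately have "(\<Sum>v \<in> {v \<in> V relabelled. (pV \<circ> jV) v = u}. local_deg relabelled (pE \<circ> jE) (w \<circ> jE) v e') =
      (\<Sum>v \<in> {v \<in> V G. pV v = u}. local_deg relabelled (pE \<circ> jE) (w \<circ> jE) (iv v) e')"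
    by (simp add: sum.reindex)
  also have "\<dots> = (\<Sum>v \<in> {v \<in> V G. pV v = u}. local_deg G pE w v e')"
    using local_deg_relabelled by (intro sum.cong) auto
  also have "\<dots> = n" using assms \<open>u \<in> V H\<close> \<open>e' \<in> E H \<union> L H\<close> \<open>adjacent H u e'\<close>
    unfolding has_degree_def by blast
  finally show "(\<Sum>v \<in> {v \<in> V relabelled. (pV \<circ> jV) v = u}. local_deg relabelled (pE \<circ> jE) (w \<circ> jE) v e') = n" .
qed

lemma hyperelliptic_cover_relabelled:
  assumes cov: "hyperelliptic_cover G T pV pE w"
  shows "hyperelliptic_cover relabelled T (pV \<circ> jV) (pE \<circ> jE) (w \<circ> jE)"
  unfolding hyperelliptic_cover_def
proof (intro conjI ballI impI)
  show "metric_graph relabelled" by (rule metric_graph_relabelled)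
  show "genus0_tree T" "harmonic relabelled T (pV \<circ> jV) (pE \<circ> jE) (w \<circ> jE)"
    "surjective_mor relabelled T (pV \<circ> jV) (pE \<circ> jE)" "has_degree relabelled T (pV \<circ> jV) (pE \<circ> jE) (w \<circ> jE) 2"
    using cov harmonic_relabelled surjective_relabelled has_degree_relabelled
    unfolding hyperelliptic_cover_def by blast+
next
  fix v e' assume v: "v \<in> V relabelled" and e': "e' \<in> E T \<union> L T" and a: "adjacent T ((pV \<circ> jV) v) e'"
  obtain v0 where v0: "v0 \<in> V G" "v = iv v0" using v unfolding relabelled_simps by auto
  then have "2 - 2 * int (gen G v0) =
      2 * int (local_deg G pE w v0 e') - int (\<Sum>x \<in> E G \<union> L G. if w x = 2 then inc G v0 x else 0)"
    using cov e' a unfolding hyperelliptic_cover_def by auto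
  then show "2 - 2 * int (gen relabelled v) = 2 * int (local_deg relabelled (pE \<circ> jE) (w \<circ> jE) v e') -
      int (\<Sum>x \<in> E relabelled \<union> L relabelled. if (w \<circ> jE) x = 2 then inc relabelled v x else 0)"
    unfolding v0(2) using local_deg_relabelled[OF v0(1), of pE w e'] weight2_inc_sum_relabelled[OF v0(1), of w]
    by (simp add: relabelled_simps(6) v0(1))
qed

lemma branch_point_relabelled:
  assumes "branch_point G pE w l"
  shows "branch_point relabelled (pE \<circ> jE) (w \<circ> jE) l"
proof -
  obtain x where "x \<in> E G \<union> L G" "pE x = l" "w x = 2" using assms unfolding branch_point_def by blast
  moreover have "ie x \<in> E relabelled \<union> L relabelled" using calculation(1) unfolding relabelled_simps by auto
  ultimately show ?thesis unfolding branch_point_def by force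
qed

end

lemma genus2_cover_relabelled_nat:
  fixes G :: "('v, 'e) mgraph"
  assumes cov: "genus2_cover_branched_at_legs G T pV pE w"
  shows "\<exists>(G' :: (nat, nat) mgraph) pV' pE' w'. genus2_cover_branched_at_legs G' T pV' pE' w'"
proof -
  have mg: "metric_graph G" using cov unfolding genus2_cover_branched_at_legs_def hyperelliptic_cover_def
    by simp
  then have "finite (V G)" "finite (E G \<union> L G)" unfolding metric_graph_def by auto
  then obtain iv :: "'v \<Rightarrow> nat" and ie :: "'e \<Rightarrow> nat" where "inj_on iv (V G)" "inj_on ie (E G \<union> L G)"
    using finite_imp_inj_to_nat_seg by metis
  then interpret relabelling G iv ie using mg by unfold_locales
  have "genus2_cover_branched_at_legs relabelled T (pV \<circ> jV) (pE \<circ> jE) (w \<circ> jE)"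
    using cov hyperelliptic_cover_relabelled graph_genus_relabelled card_L_relabelled
    unfolding genus2_cover_branched_at_legs_def by (auto intro: branch_point_relabelled)
  then show ?thesis by blast
qed

section \<open>Isomorphisms of covers\<close>

lemma iso_coversE:
  assumes "iso_covers G1 pV1 pE1 w1 G2 pV2 pE2 w2"
  obtains fV fE where "bij_betw fV (V G1) (V G2)" "bij_betw fE (E G1) (E G2)" "bij_betw fE (L G1) (L G2)"
    "\<And>e. e \<in> E G1 \<Longrightarrow> {# fV (fst (ends G1 e)), fV (snd (ends G1 e)) #} =
       {# fst (ends G2 (fE e)), snd (ends G2 (fE e)) #}"
    "\<And>e. e \<in> E G1 \<Longrightarrow> len G2 (fE e) = len G1 e"
    "\<And>l. l \<in> L G1 \<Longrightarrow> fV (fst (ends G1 l)) = fst (ends G2 (fE l))"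
    "\<And>v. v \<in> V G1 \<Longrightarrow> gen G2 (fV v) = gen G1 v" "\<And>v. v \<in> V G1 \<Longrightarrow> pV2 (fV v) = pV1 v"
    "\<And>e. e \<in> E G1 \<union> L G1 \<Longrightarrow> pE2 (fE e) = pE1 e" "\<And>e. e \<in> E G1 \<union> L G1 \<Longrightarrow> w2 (fE e) = w1 e"
  using assms unfolding iso_covers_def by (elim exE conjE) (rule that; blast)

lemma iso_covers_trans:
  assumes "iso_covers G1 pV1 pE1 w1 G2 pV2 pE2 w2" and "iso_covers G2 pV2 pE2 w2 G3 pV3 pE3 w3"
  shows "iso_covers G1 pV1 pE1 w1 G3 pV3 pE3 w3"
proof -
  obtain fV fE where f: "bij_betw fV (V G1) (V G2)" "bij_betw fE (E G1) (E G2)" "bij_betw fE (L G1) (L G2)"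
    "\<And>e. e \<in> E G1 \<Longrightarrow> {# fV (fst (ends G1 e)), fV (snd (ends G1 e)) #} =
       {# fst (ends G2 (fE e)), snd (ends G2 (fE e)) #}"
    "\<And>e. e \<in> E G1 \<Longrightarrow> len G2 (fE e) = len G1 e"
    "\<And>l. l \<in> L G1 \<Longrightarrow> fV (fst (ends G1 l)) = fst (ends G2 (fE l))"
    "\<And>v. v \<in> V G1 \<Longrightarrow> gen G2 (fV v) = gen G1 v" "\<And>v. v \<in> V G1 \<Longrightarrow> pV2 (fV v) = pV1 v"
    "\<And>e. e \<in> E G1 \<union> L G1 \<Longrightarrow> pE2 (fE e) = pE1 e" "\<And>e. e \<in> E G1 \<union> L G1 \<Longrightarrow> w2 (fE e) = w1 e"
    using assms(1) by (elim iso_coversE) blast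
  obtain gV gE where g: "bij_betw gV (V G2) (V G3)" "bij_betw gE (E G2) (E G3)" "bij_betw gE (L G2) (L G3)"
    "\<And>e. e \<in> E G2 \<Longrightarrow> {# gV (fst (ends G2 e)), gV (snd (ends G2 e)) #} =
       {# fst (ends G3 (gE e)), snd (ends G3 (gE e)) #}"
    "\<And>e. e \<in> E G2 \<Longrightarrow> len G3 (gE e) = len G2 e"
    "\<And>l. l \<in> L G2 \<Longrightarrow> gV (fst (ends G2 l)) = fst (ends G3 (gE l))"
    "\<And>v. v \<in> V G2 \<Longrightarrow> gen G3 (gV v) = gen G2 v" "\<And>v. v \<in> V G2 \<Longrightarrow> pV3 (gV v) = pV2 v"
    "\<And>e. e \<in> E G2 \<union> L G2 \<Longrightarrow> pE3 (gE e) = pE2 e" "\<And>e. e \<in> E G2 \<union> L G2 \<Longrightarrow> w3 (gE e) = w2 e"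
    using assms(2) by (elim iso_coversE) blast
  have fE_E: "fE e \<in> E G2" if "e \<in> E G1" for e using f(2) that bij_betwE by blast
  have fE_L: "fE l \<in> L G2" if "l \<in> L G1" for l using f(3) that bij_betwE by blast
  have fV_V: "fV v \<in> V G2" if "v \<in> V G1" for v using f(1) that bij_betwE by blast
  show ?thesis unfolding iso_covers_def
  proof (intro exI[of _ "gV \<circ> fV"] exI[of _ "gE \<circ> fE"] conjI ballI)
    show "bij_betw (gV \<circ> fV) (V G1) (V G3)" "bij_betw (gE \<circ> fE) (E G1) (E G3)" "bij_betw (gE \<circ> fE) (L G1) (L G3)"
      using f(1-3) g(1-3) by (auto intro: bij_betw_trans)
  next
    fix e assume e: "e \<in> E G1"
    have "{# (gV \<circ> fV) (fst (ends G1 e)), (gV \<circ> fV) (snd (ends G1 e)) #} =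
        image_mset gV {# fV (fst (ends G1 e)), fV (snd (ends G1 e)) #}" by simp
    also have "\<dots> = {# fst (ends G3 (gE (fE e))), snd (ends G3 (gE (fE e))) #}"
      using f(4)[OF e] g(4)[OF fE_E[OF e]] by simp
    finally show "{# (gV \<circ> fV) (fst (ends G1 e)), (gV \<circ> fV) (snd (ends G1 e)) #} =
        {# fst (ends G3 ((gE \<circ> fE) e)), snd (ends G3 ((gE \<circ> fE) e)) #}" by simp
    show "len G3 ((gE \<circ> fE) e) = len G1 e" using f(5)[OF e] g(5)[OF fE_E[OF e]] by simp
  next
    fix l assume "l \<in> L G1"
    then show "(gV \<circ> fV) (fst (ends G1 l)) = fst (ends G3 ((gE \<circ> fE) l))" using f(6) g(6) fE_L by simp
  next
    fix v assume "v \<in> V G1"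
    then show "gen G3 ((gV \<circ> fV) v) = gen G1 v" "pV3 ((gV \<circ> fV) v) = pV1 v" using f(7,8) g(7,8) fV_V
      by simp_all
  next
    fix e assume "e \<in> E G1 \<union> L G1"
    then have "fE e \<in> E G2 \<union> L G2" using fE_E fE_L by blast
    then show "pE3 ((gE \<circ> fE) e) = pE1 e" "w3 ((gE \<circ> fE) e) = w1 e"
      using f(9,10) g(9,10) \<open>e \<in> E G1 \<union> L G1\<close> by simp_all
  qed
qed

lemma inverse_on_disjoint_union:
  assumes "bij_betw f A C" and "bij_betw f B D" and "C \<inter> D = {}"
  obtains g where "bij_betw g C A" "bij_betw g D B" "\<And>y. y \<in> C \<union> D \<Longrightarrow> f (g y) = y"
proof
  define g where "g y = (if y \<in> C then inv_into A f y else inv_into B f y)" for y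
  show "bij_betw g C A" using bij_betw_inv_into[OF assms(1)]
    by (rule bij_betw_cong[THEN iffD1, rotated]) (simp add: g_def)
  show "bij_betw g D B" using bij_betw_inv_into[OF assms(2)]
    by (rule bij_betw_cong[THEN iffD1, rotated]) (use assms(3) in \<open>auto simp: g_def\<close>)
  show "f (g y) = y" if "y \<in> C \<union> D" for y
    using that assms by (auto simp: g_def bij_betw_inv_into_right)
qed

lemma iso_covers_sym:
  assumes mg1: "metric_graph G1" and mg2: "metric_graph G2"
    and iso: "iso_covers G1 pV1 pE1 w1 G2 pV2 pE2 w2"
  shows "iso_covers G2 pV2 pE2 w2 G1 pV1 pE1 w1"
proof -
  interpret G1: wf_mgraph G1 using mg1 by unfold_locales
  interpret G2: wf_mgraph G2 using mg2 by unfold_locales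
  obtain fV fE where f: "bij_betw fV (V G1) (V G2)" "bij_betw fE (E G1) (E G2)" "bij_betw fE (L G1) (L G2)"
    "\<And>e. e \<in> E G1 \<Longrightarrow> {# fV (fst (ends G1 e)), fV (snd (ends G1 e)) #} =
       {# fst (ends G2 (fE e)), snd (ends G2 (fE e)) #}"
    "\<And>e. e \<in> E G1 \<Longrightarrow> len G2 (fE e) = len G1 e"
    "\<And>l. l \<in> L G1 \<Longrightarrow> fV (fst (ends G1 l)) = fst (ends G2 (fE l))"
    "\<And>v. v \<in> V G1 \<Longrightarrow> gen G2 (fV v) = gen G1 v" "\<And>v. v \<in> V G1 \<Longrightarrow> pV2 (fV v) = pV1 v"
    "\<And>e. e \<in> E G1 \<union> L G1 \<Longrightarrow> pE2 (fE e) = pE1 e" "\<And>e. e \<in> E G1 \<union> L G1 \<Longrightarrow> w2 (fE e) = w1 e"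
    using iso by (elim iso_coversE) blast
  obtain gE where gE: "bij_betw gE (E G2) (E G1)" "bij_betw gE (L G2) (L G1)"
    "\<And>y. y \<in> E G2 \<union> L G2 \<Longrightarrow> fE (gE y) = y"
    using inverse_on_disjoint_union[OF f(2,3) G2.E_L_disjoint] by blast
  define gV where "gV = inv_into (V G1) fV"
  have gV: "bij_betw gV (V G2) (V G1)" unfolding gV_def using f(1) by (rule bij_betw_inv_into)
  have gV_fV: "gV (fV v) = v" if "v \<in> V G1" for v
    unfolding gV_def using f(1) that by (simp add: bij_betw_inv_into_left)
  have fV_gV: "fV (gV v) = v" if "v \<in> V G2" for v
    unfolding gV_def using f(1) that by (simp add: bij_betw_inv_into_right)
  have gE_E: "gE y \<in> E G1" if "y \<in> E G2" for y using gE(1) that bij_betwE by blast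
  have gE_L: "gE y \<in> L G1" if "y \<in> L G2" for y using gE(2) that bij_betwE by blast
  show ?thesis unfolding iso_covers_def
  proof (intro exI[of _ gV] exI[of _ gE] conjI ballI)
    show "bij_betw gV (V G2) (V G1)" "bij_betw gE (E G2) (E G1)" "bij_betw gE (L G2) (L G1)"
      using gV gE by auto
  next
    fix y assume y: "y \<in> E G2"
    then have x: "gE y \<in> E G1" "fE (gE y) = y" using gE_E gE(3) by auto
    have "{# gV (fst (ends G2 y)), gV (snd (ends G2 y)) #} =
        image_mset gV {# fV (fst (ends G1 (gE y))), fV (snd (ends G1 (gE y))) #}"
      using f(4)[OF x(1)] x(2) by simp
    also have "\<dots> = {# fst (ends G1 (gE y)), snd (ends G1 (gE y)) #}"
      using gV_fV G1.edge_ends_V[OF x(1)] by simp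
    finally show "{# gV (fst (ends G2 y)), gV (snd (ends G2 y)) #} = {# fst (ends G1 (gE y)), snd (ends G1 (gE y)) #}" .
    show "len G1 (gE y) = len G2 y" using f(5)[OF x(1)] x(2) by simp
  next
    fix y assume "y \<in> L G2"
    then have x: "gE y \<in> L G1" "fE (gE y) = y" using gE_L gE(3) by auto
    then show "gV (fst (ends G2 y)) = fst (ends G1 (gE y))"
      using f(6)[OF x(1)] gV_fV G1.leg_end_V[OF x(1)] by metis
  next
    fix v assume "v \<in> V G2"
    then show "gen G1 (gV v) = gen G2 v" "pV1 (gV v) = pV2 v"
      using f(7,8) bij_betwE[OF gV] fV_gV by metis+
  next
    fix y assume "y \<in> E G2 \<union> L G2"
    then have "gE y \<in> E G1 \<union> L G1" "fE (gE y) = y" using gE_E gE_L gE(3) by auto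
    then show "pE1 (gE y) = pE2 y" "w1 (gE y) = w2 y" using f(9,10) by metis+
  qed
qed

section \<open>Covers branched at all legs are canonical\<close>

locale branched_cover = leg_rooted_tree T \<rho> for T :: "('tv, 'te) mgraph" and \<rho> +
  fixes G :: "('v, 'e) mgraph" and pV :: "'v \<Rightarrow> 'tv" and pE :: "'e \<Rightarrow> 'te" and w :: "'e \<Rightarrow> nat"
  assumes cover: "hyperelliptic_cover G T pV pE w"
    and legs_branched: "\<forall>l \<in> L T. branch_point G pE w l"
begin

sublocale G: wf_mgraph G
  using cover unfolding hyperelliptic_cover_def by unfold_locales simp

abbreviation branched :: "'te \<Rightarrow> bool" where
  "branched \<equiv> branch_point G pE w"

lemma harmonic_G: "harmonic G T pV pE w"
  and degree_G: "has_degree G T pV pE w 2"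
  and surjective_G: "surjective_mor G T pV pE"
  using cover unfolding hyperelliptic_cover_def by blast+

lemma morphism_G: "morphism G T pV pE w"
  using harmonic_G unfolding harmonic_def by blast

lemma riemann_hurwitz_G: "v \<in> V G \<Longrightarrow> e' \<in> E T \<union> L T \<Longrightarrow> adjacent T (pV v) e' \<Longrightarrow>
        2 - 2 * int (gen G v) =
          2 * int (local_deg G pE w v e') - int (\<Sum>e \<in> E G \<union> L G. if w e = 2 then inc G v e else 0)"
  using cover unfolding hyperelliptic_cover_def by blast

lemma pV_V: "v \<in> V G \<Longrightarrow> pV v \<in> V T"
  using morphism_G unfolding morphism_def by simp

lemma morphism_edge: "x \<in> E G \<Longrightarrow> pE x \<in> E T \<and> w x > 0 \<and>
   {# pV (fst (ends G x)), pV (snd (ends G x)) #} = {# fst (ends T (pE x)), snd (ends T (pE x)) #} \<and>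
   len T (pE x) = real (w x) * len G x"
  using morphism_G unfolding morphism_def by blast

lemma morphism_leg: "x \<in> L G \<Longrightarrow> pE x \<in> L T \<and> w x > 0 \<and> pV (fst (ends G x)) = fst (ends T (pE x))"
  using morphism_G unfolding morphism_def by blast

lemma weight_pos: "x \<in> E G \<union> L G \<Longrightarrow> w x > 0"
  using morphism_edge morphism_leg by blast

definition end_over :: "'e \<Rightarrow> 'tv \<Rightarrow> 'v" where
  "end_over x a = (if x \<in> L G then fst (ends G x)
               else if pV (fst (ends G x)) = a then fst (ends G x) else snd (ends G x))"

lemma inc_end_over:
  assumes x: "x \<in> E G \<union> L G" and a: "adjacent T a (pE x)"
  shows "end_over x a \<in> V G \<and> pV (end_over x a) = a \<and>
         (\<forall>v \<in> V G. pV v = a \<longrightarrow> inc G v x = (if v = end_over x a then 1 else 0))"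
proof (cases "x \<in> E G")
  case True
  have m: "pE x \<in> E T" "{# pV (fst (ends G x)), pV (snd (ends G x)) #} = {# fst (ends T (pE x)), snd (ends T (pE x)) #}"
    using morphism_edge[OF True] by auto
  have ne: "fst (ends T (pE x)) \<noteq> snd (ends T (pE x))" using edge_not_loop[OF m(1)] .
  have ain: "a = fst (ends T (pE x)) \<or> a = snd (ends T (pE x))"
    using a inc_E[OF m(1)] unfolding adjacent_def by (auto split: if_splits)
  have xL: "x \<notin> L G" using True G.E_L_disjoint by auto
  have eV: "fst (ends G x) \<in> V G" "snd (ends G x) \<in> V G" using G.edge_ends_V[OF True] by auto
  from mset_pair_eq[OF m(2)] ain ne show ?thesis
    unfolding end_over_def inc_def using xL True eV by auto
next
  case False
  then have xL: "x \<in> L G" using x by simp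
  have m: "pE x \<in> L T" "pV (fst (ends G x)) = fst (ends T (pE x))" using morphism_leg[OF xL] by auto
  have "fst (ends T (pE x)) = a" using a adjacent_L_iff[OF m(1)] by simp
  then show ?thesis unfolding end_over_def inc_def using xL False G.leg_end_V[OF xL] m by auto
qed

definition over :: "'te \<Rightarrow> 'e set" where
  "over e' = {x \<in> E G \<union> L G. pE x = e'}"

definition fibre :: "'tv \<Rightarrow> 'v set" where
  "fibre a = {v \<in> V G. pV v = a}"

lemma finite_over: "finite (over e')" and finite_fibre: "finite (fibre a)"
  unfolding over_def fibre_def using G.finite_E G.finite_L G.finite_V by simp_all

lemma local_deg_over:
  assumes v: "v \<in> V G" and a: "adjacent T (pV v) e'"
  shows "local_deg G pE w v e' = (\<Sum>x \<in> over e'. if end_over x (pV v) = v then w x else 0)"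
proof -
  have "local_deg G pE w v e' = (\<Sum>x \<in> over e'. inc G v x * w x)"
    unfolding local_deg_def over_def by (rule sum.inter_filter[symmetric]) (simp add: G.finite_E G.finite_L)
  also have "\<dots> = (\<Sum>x \<in> over e'. if end_over x (pV v) = v then w x else 0)"
  proof (rule sum.cong)
    fix x assume "x \<in> over e'"
    then have x: "x \<in> E G \<union> L G" "pE x = e'" unfolding over_def by auto
    then show "inc G v x * w x = (if end_over x (pV v) = v then w x else 0)"
      using inc_end_over[OF x(1)] a v by auto
  qed simp
  finally show ?thesis .
qed

lemma sum_weights_over:
  assumes e': "e' \<in> E T \<union> L T"
  shows "(\<Sum>x \<in> over e'. w x) = 2"
proof -
  define a where "a = fst (ends T e')"
  have aV: "a \<in> V T" using e' T.edge_ends_V T.leg_end_V unfolding a_def by auto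
  have adj: "adjacent T a e'" using e' unfolding a_def adjacent_def inc_def by auto
  have "2 = (\<Sum>v \<in> fibre a. local_deg G pE w v e')"
    using degree_G aV e' adj unfolding has_degree_def fibre_def by auto
  also have "\<dots> = (\<Sum>v \<in> fibre a. \<Sum>x \<in> over e'. if end_over x a = v then w x else 0)"
    using local_deg_over adj unfolding fibre_def by (intro sum.cong) auto
  also have "\<dots> = (\<Sum>x \<in> over e'. \<Sum>v \<in> fibre a. if end_over x a = v then w x else 0)"
    by (rule sum.swap)
  also have "\<dots> = (\<Sum>x \<in> over e'. w x)"
  proof (rule sum.cong)
    fix x assume "x \<in> over e'"
    then have x: "x \<in> E G \<union> L G" "pE x = e'" unfolding over_def by auto
    have "end_over x a \<in> fibre a" using inc_end_over[OF x(1)] adj x(2) unfolding fibre_def by auto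
    then show "(\<Sum>v \<in> fibre a. if end_over x a = v then w x else 0) = w x"
      using finite_fibre by (simp add: sum.delta)
  qed simp
  finally show ?thesis by simp
qed

lemma over_cases:
  assumes e': "e' \<in> E T \<union> L T"
  shows "(\<exists>x. over e' = {x} \<and> w x = 2) \<or> (\<exists>x y. x \<noteq> y \<and> over e' = {x, y} \<and> w x = 1 \<and> w y = 1)"
  by (rule sum_nat_eq_2_cases[OF finite_over _ sum_weights_over[OF e']]) (auto simp: over_def weight_pos)

lemma ex_incident_G: "v \<in> V G \<Longrightarrow> \<exists>x \<in> E G \<union> L G. inc G v x > 0"
proof -
  have "L T \<noteq> {}" using leg_at_root by auto
  then have "L G \<noteq> {}" using surjective_G unfolding surjective_mor_def by auto
  then show "v \<in> V G \<Longrightarrow> ?thesis" using G.ex_incident by blast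
qed

lemma adjacent_if_inc:
  assumes v: "v \<in> V G" and x: "x \<in> E G \<union> L G" and i: "inc G v x > 0"
  shows "adjacent T (pV v) (pE x) \<and> end_over x (pV v) = v"
proof -
  have adj: "adjacent T (pV v) (pE x)"
  proof (cases "x \<in> E G")
    case True
    have m: "pE x \<in> E T" "{# pV (fst (ends G x)), pV (snd (ends G x)) #} = {# fst (ends T (pE x)), snd (ends T (pE x)) #}"
      using morphism_edge[OF True] by auto
    have "v = fst (ends G x) \<or> v = snd (ends G x)" using i True unfolding inc_def by (auto split: if_splits)
    then have "pV v = fst (ends T (pE x)) \<or> pV v = snd (ends T (pE x))" using mset_pair_eq[OF m(2)] by auto
    then show ?thesis using inc_E[OF m(1)] unfolding adjacent_def by auto
  next
    case False
    then have xL: "x \<in> L G" using x by simp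
    then have "v = fst (ends G x)" using i False unfolding inc_def by (auto split: if_splits)
    then show ?thesis using morphism_leg[OF xL] adjacent_L_iff by auto
  qed
  have "inc G v x = (if v = end_over x (pV v) then 1 else 0)" using inc_end_over[OF x adj] v by auto
  then show ?thesis using adj i by (auto split: if_splits)
qed

lemma local_deg_ge_weight: "v \<in> V G \<Longrightarrow> x \<in> over e' \<Longrightarrow> adjacent T (pV v) e' \<Longrightarrow>
    end_over x (pV v) = v \<Longrightarrow> local_deg G pE w v e' \<ge> w x"
proof -
  assume v: "v \<in> V G" and x: "x \<in> over e'" and a: "adjacent T (pV v) e'" and ev: "end_over x (pV v) = v"
  have "w x = (if end_over x (pV v) = v then w x else 0)" using ev by simp
  also have "\<dots> \<le> (\<Sum>x \<in> over e'. if end_over x (pV v) = v then w x else 0)"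
    by (rule member_le_sum[OF x]) (auto simp: finite_over)
  finally show ?thesis using local_deg_over[OF v a] by simp
qed

lemma local_deg_pos: "v \<in> V G \<Longrightarrow> e' \<in> E T \<union> L T \<Longrightarrow> adjacent T (pV v) e' \<Longrightarrow> local_deg G pE w v e' \<ge> 1"
proof -
  assume v: "v \<in> V G" and e': "e' \<in> E T \<union> L T" and a: "adjacent T (pV v) e'"
  obtain x where x: "x \<in> E G \<union> L G" "inc G v x > 0" using ex_incident_G[OF v] by auto
  have ia: "adjacent T (pV v) (pE x)" "end_over x (pV v) = v" using adjacent_if_inc[OF v x] by auto
  have xe: "pE x \<in> E T \<union> L T" using x(1) morphism_edge morphism_leg by blast
  have "local_deg G pE w v (pE x) \<ge> w x" using local_deg_ge_weight[OF v _ ia] x(1) unfolding over_def by auto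
  moreover have "w x \<ge> 1" using weight_pos[OF x(1)] by simp
  moreover have "local_deg G pE w v (pE x) = local_deg G pE w v e'"
    using harmonic_G v xe e' ia a unfolding harmonic_def by blast
  ultimately show ?thesis by simp
qed

lemma ex_adjacent: "a \<in> V T \<Longrightarrow> \<exists>e' \<in> E T \<union> L T. adjacent T a e'"
proof -
  assume a: "a \<in> V T"
  show ?thesis
  proof (cases "a = \<rho>")
    case True
    then obtain l where "l \<in> L T" "fst (ends T l) = a" using leg_at_root by auto
    then show ?thesis using adjacent_L_iff by auto
  next
    case False
    then have "parent_edge a \<in> E T" "adjacent T a (parent_edge a)"
      using parent_edge_E a adjacent_E_iff lower_end_parent_edge by auto
    then show ?thesis by auto
  qed
qed

lemma fibre_cases:
  assumes a: "a \<in> V T" and e': "e' \<in> E T \<union> L T" and adj: "adjacent T a e'"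
  shows "(\<exists>v. fibre a = {v} \<and> local_deg G pE w v e' = 2) \<or>
         (\<exists>v1 v2. v1 \<noteq> v2 \<and> fibre a = {v1, v2} \<and> local_deg G pE w v1 e' = 1 \<and> local_deg G pE w v2 e' = 1)"
proof (rule sum_nat_eq_2_cases[OF finite_fibre])
  show "\<forall>v \<in> fibre a. local_deg G pE w v e' > 0" using local_deg_pos e' adj unfolding fibre_def by fastforce
  show "(\<Sum>v \<in> fibre a. local_deg G pE w v e') = 2" using degree_G a e' adj unfolding has_degree_def fibre_def
    by auto
qed

lemma branched_iff_over: "branched e' \<longleftrightarrow> (\<exists>x \<in> over e'. w x = 2)"
  unfolding branch_point_def over_def by auto

lemma fibre_single_if_branched:
  assumes a: "a \<in> V T" and e': "e' \<in> E T \<union> L T" and adj: "adjacent T a e'" and x: "x \<in> over e'" and wx: "w x = 2"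
  shows "fibre a = {end_over x a}"
proof -
  have x1: "x \<in> E G \<union> L G" "pE x = e'" using x unfolding over_def by auto
  have en: "end_over x a \<in> V G" "pV (end_over x a) = a" using inc_end_over[OF x1(1)] adj x1(2) by auto
  have ge: "local_deg G pE w (end_over x a) e' \<ge> 2" using local_deg_ge_weight[OF en(1) x] adj en wx by simp
  have enF: "end_over x a \<in> fibre a" unfolding fibre_def using en by simp
  from fibre_cases[OF a e' adj] show ?thesis
  proof (elim disjE exE conjE)
    fix v assume "fibre a = {v}" then show ?thesis using enF by auto
  next
    fix v1 v2 assume h: "fibre a = {v1, v2}" "local_deg G pE w v1 e' = 1" "local_deg G pE w v2 e' = 1"
    then have "end_over x a = v1 \<or> end_over x a = v2" using enF by auto
    then show ?thesis using ge h by auto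
  qed
qed

definition branched_count :: "'tv \<Rightarrow> nat" where
  "branched_count a = card {e' \<in> E T \<union> L T. adjacent T a e' \<and> branched e'}"

lemma over_branched: "e' \<in> E T \<union> L T \<Longrightarrow> branched e' \<Longrightarrow> \<exists>x. over e' = {x} \<and> w x = 2"
  using over_cases[of e'] unfolding branched_iff_over by auto

lemma weight2_inc_sum_over:
  assumes v: "v \<in> V G" and e': "e' \<in> E T \<union> L T"
  shows "(\<Sum>x \<in> over e'. if w x = 2 then inc G v x else 0) = (if adjacent T (pV v) e' \<and> branched e' then 1 else 0)"
proof (cases "adjacent T (pV v) e' \<and> branched e'")
  case True
  then obtain x where x: "over e' = {x}" "w x = 2" using over_branched e' by blast
  then have x1: "x \<in> E G \<union> L G" "pE x = e'" unfolding over_def by auto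
  have "fibre (pV v) = {end_over x (pV v)}"
    using fibre_single_if_branched[OF pV_V[OF v] e'] True x by simp
  moreover have "v \<in> fibre (pV v)" using v unfolding fibre_def by simp
  ultimately have "end_over x (pV v) = v" by simp
  then have "inc G v x = 1" using inc_end_over[OF x1(1)] True x1(2) v by auto
  then show ?thesis using x True by simp
next
  case False
  have "(if w x = 2 then inc G v x else 0) = 0" if "x \<in> over e'" for x
  proof -
    have x: "x \<in> E G \<union> L G" "pE x = e'" using that unfolding over_def by auto
    show ?thesis using False adjacent_if_inc[OF v x(1)] x(2) that branched_iff_over by auto
  qed
  then show ?thesis using False by simp
qed

lemma weight2_inc_sum_G: "v \<in> V G \<Longrightarrow>
    (\<Sum>x \<in> E G \<union> L G. if w x = 2 then inc G v x else 0) = branched_count (pV v)"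
proof -
  assume v: "v \<in> V G"
  have img: "pE ` (E G \<union> L G) \<subseteq> E T \<union> L T" using morphism_edge morphism_leg by blast
  have "(\<Sum>x \<in> E G \<union> L G. if w x = 2 then inc G v x else 0) =
        (\<Sum>e' \<in> E T \<union> L T. \<Sum>x \<in> over e'. if w x = 2 then inc G v x else 0)"
    unfolding over_def by (rule sum.group[symmetric]) (auto simp: G.finite_E G.finite_L T.finite_E T.finite_L img)
  also have "\<dots> = (\<Sum>e' \<in> E T \<union> L T. if adjacent T (pV v) e' \<and> branched e' then 1 else 0)"
    using weight2_inc_sum_over[OF v] by simp
  also have "\<dots> = branched_count (pV v)"
    unfolding branched_count_def using card_filter_eq_sum[of "E T \<union> L T"] T.finite_E T.finite_L by simp
  finally show ?thesis .
qed

lemma riemann_hurwitz_fibre: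
  assumes v: "v \<in> V G"
  shows "(card (fibre (pV v)) = 1 \<longleftrightarrow> branched_count (pV v) > 0) \<and> even (branched_count (pV v)) \<and>
         int (gen G v) * 2 = int (branched_count (pV v)) - (if branched_count (pV v) > 0 then 2 else 0)"
proof -
  define a where "a = pV v"
  have aV: "a \<in> V T" using pV_V v unfolding a_def by simp
  obtain e' where e': "e' \<in> E T \<union> L T" "adjacent T a e'" using ex_adjacent[OF aV] by auto
  have rh: "2 - 2 * int (gen G v) = 2 * int (local_deg G pE w v e') - int (branched_count a)"
    using riemann_hurwitz_G[OF v e'(1)] e'(2) weight2_inc_sum_G[OF v] unfolding a_def by simp
  have vF: "v \<in> fibre a" using v unfolding fibre_def a_def by simp
  show ?thesis
  proof (cases "\<exists>u. fibre a = {u} \<and> local_deg G pE w u e' = 2")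
    case True
    then obtain u where u: "fibre a = {u}" "local_deg G pE w u e' = 2" by auto
    then have "u = v" using vF by auto
    then have "int (branched_count a) = 2 + 2 * int (gen G v)" using rh u by simp
    then have "branched_count a = 2 + 2 * gen G v" by linarith
    then show ?thesis using u unfolding a_def[symmetric] by (auto simp: even_add)
  next
    case False
    then obtain v1 v2 where vv: "v1 \<noteq> v2" "fibre a = {v1, v2}" "local_deg G pE w v1 e' = 1" "local_deg G pE w v2 e' = 1"
      using fibre_cases[OF aV e'] by blast
    then have "local_deg G pE w v e' = 1" using vF by auto
    then have r: "int (branched_count a) = 2 * int (gen G v)" using rh by simp
    have r0: "branched_count a = 0"
    proof (rule ccontr)
      assume "branched_count a \<noteq> 0"
      then have "{e' \<in> E T \<union> L T. adjacent T a e' \<and> branched e'} \<noteq> {}" unfolding branched_count_def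
        by (metis card.empty)
      then obtain f where "f \<in> {e' \<in> E T \<union> L T. adjacent T a e' \<and> branched e'}" by blast
      then have f: "f \<in> E T \<union> L T" "adjacent T a f" "branched f" by auto
      then obtain x where x: "over f = {x}" "w x = 2" using over_branched by blast
      have "fibre a = {end_over x a}" using fibre_single_if_branched[OF aV f(1) f(2)] x by simp
      then show False using vv by auto
    qed
    then show ?thesis using r vv unfolding a_def[symmetric] by simp
  qed
qed

lemma branched_count_split: "a \<in> V T \<Longrightarrow> branched_count a = card {e \<in> E T. adjacent T a e \<and> branched e} + legs_at a"
proof -
  assume a: "a \<in> V T"
  have "{e' \<in> E T \<union> L T. adjacent T a e' \<and> branched e'} =
        {e \<in> E T. adjacent T a e \<and> branched e} \<union> {l \<in> L T. fst (ends T l) = a}"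
    using legs_branched adjacent_L_iff by auto
  moreover have "card ({e \<in> E T. adjacent T a e \<and> branched e} \<union> {l \<in> L T. fst (ends T l) = a}) =
        card {e \<in> E T. adjacent T a e \<and> branched e} + card {l \<in> L T. fst (ends T l) = a}"
    by (rule card_Un_disjoint) (use T.finite_E T.finite_L T.E_L_disjoint in auto)
  ultimately show ?thesis unfolding branched_count_def legs_at_def by simp
qed

lemma even_branched_count: "a \<in> V T \<Longrightarrow> even (branched_count a)"
proof -
  assume a: "a \<in> V T"
  then have "a \<in> pV ` V G" using surjective_G unfolding surjective_mor_def by simp
  then obtain v where "v \<in> V G" "pV v = a" by blast
  then show ?thesis using riemann_hurwitz_fibre by blast
qed

lemma branched_iff_odd_edge_step:
  assumes eE: "e \<in> E T"
    and below: "\<And>f. f \<in> E T \<Longrightarrow> adjacent T (lower_end e) f \<Longrightarrow> f \<noteq> e \<Longrightarrow> branched f = odd_edge f"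
  shows "branched e = odd_edge e"
proof (rule ccontr)
  assume differ: "branched e \<noteq> odd_edge e"
  define c where "c = lower_end e"
  have c: "c \<in> V T" "adjacent T c e" using lower_end[OF eE] adjacent_E_iff[OF eE] unfolding c_def by auto
  define X where "X = {f \<in> E T. adjacent T c f \<and> branched f}"
  define Y where "Y = {f \<in> E T. adjacent T c f \<and> odd_edge f}"
  have "(X - Y) \<union> (Y - X) = {e}"
    using below differ c eE unfolding X_def Y_def c_def by auto
  then have "odd (card X + card Y)"
    by (rule odd_card_add_if_symdiff_singleton[rotated 2]) (auto simp: X_def Y_def T.finite_E)
  moreover have "even (card X + legs_at c)"
    using even_branched_count[OF c(1)] branched_count_split[OF c(1)] unfolding X_def by simp
  moreover have "even (card Y + legs_at c)"
    using even_branch_count[OF even_legs c(1)] unfolding Y_def branch_count_def by simp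
  ultimately show False by presburger
qed

lemma branched_iff_odd_edge: "e \<in> E T \<Longrightarrow> branched e = odd_edge e"
proof (induction "Max (depth ` V T) - depth (lower_end e)" arbitrary: e rule: less_induct)
  case less
  show ?case
  proof (rule branched_iff_odd_edge_step[OF less.prems])
    fix f assume f: "f \<in> E T" "adjacent T (lower_end e) f" "f \<noteq> e"
    have "f \<in> parent_edge ` children (lower_end e)"
      using edges_at[of "lower_end e"] lower_end[OF less.prems] f by auto
    then have "depth (lower_end f) = depth (lower_end e) + 1"
      using depth_child lower_end_parent_edge unfolding children_def by auto
    moreover have "depth (lower_end f) \<le> Max (depth ` V T)"
      using lower_end[OF f(1)] T.finite_V by simp
    ultimately show "branched f = odd_edge f" using less.hyps f(1) by simp
  qed
qed

lemma branched_count_eq: "a \<in> V T \<Longrightarrow> branched_count a = branch_count a"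
  unfolding branch_count_def using branched_count_split branched_iff_odd_edge
    by (metis (no_types, lifting) Collect_cong)

lemma fibre_ramified: "a \<in> V T \<Longrightarrow> ramified a \<Longrightarrow> \<exists>v. fibre a = {v}"
proof -
  assume a: "a \<in> V T" "ramified a"
  have "a \<in> pV ` V G" using a surjective_G unfolding surjective_mor_def by simp
  then obtain v where v: "v \<in> V G" "pV v = a" by blast
  then have "card (fibre a) = 1" using riemann_hurwitz_fibre[OF v(1)] branched_count_eq[OF a(1)] a(2)
    unfolding ramified_def by simp
  then show ?thesis by (simp add: card_1_singleton_iff)
qed

lemma fibre_unramified: "a \<in> V T \<Longrightarrow> \<not> ramified a \<Longrightarrow> \<exists>v1 v2. v1 \<noteq> v2 \<and> fibre a = {v1, v2}"
proof -
  assume a: "a \<in> V T" "\<not> ramified a"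
  have "a \<in> pV ` V G" using a surjective_G unfolding surjective_mor_def by simp
  then obtain v where v: "v \<in> V G" "pV v = a" by blast
  then have "card (fibre a) \<noteq> 1" using riemann_hurwitz_fibre[OF v(1)] branched_count_eq[OF a(1)] a(2)
    unfolding ramified_def by simp
  moreover obtain e' where e': "e' \<in> E T \<union> L T" "adjacent T a e'" using ex_adjacent[OF a(1)] by auto
  ultimately show ?thesis using fibre_cases[OF a(1) e'] by auto
qed

lemma gen_G_eq: "v \<in> V G \<Longrightarrow> gen G v = (branch_count (pV v) - 2) div 2"
proof -
  assume v: "v \<in> V G"
  have "int (gen G v) * 2 = int (branch_count (pV v)) - (if ramified (pV v) then 2 else 0)"
    using riemann_hurwitz_fibre[OF v] branched_count_eq[OF pV_V[OF v]] unfolding ramified_def by simp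
  then show ?thesis using twice_vertex_genus[OF pV_V[OF v]] by simp
qed

lemma over_odd_edge: "e' \<in> E T \<Longrightarrow> odd_edge e' \<Longrightarrow> \<exists>x. over e' = {x} \<and> w x = 2"
  using over_branched branched_iff_odd_edge by blast

lemma over_even_edge: "e' \<in> E T \<Longrightarrow> \<not> odd_edge e' \<Longrightarrow> \<exists>x y. x \<noteq> y \<and> over e' = {x, y} \<and> w x = 1 \<and> w y = 1"
proof -
  assume e: "e' \<in> E T" "\<not> odd_edge e'"
  then have "\<not> branched e'" using branched_iff_odd_edge by simp
  then show ?thesis using over_cases[of e'] e unfolding branched_iff_over by auto
qed

lemma over_leg: "l \<in> L T \<Longrightarrow> \<exists>x. over l = {x} \<and> w x = 2"
  using over_branched legs_branched by blast

end

context branched_cover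
begin

lemma over_edge_subset: "e' \<in> E T \<Longrightarrow> over e' \<subseteq> E G"
  and over_leg_subset: "l \<in> L T \<Longrightarrow> over l \<subseteq> L G"
  unfolding over_def using morphism_edge morphism_leg T.E_L_disjoint by auto

lemma unique_edge_at:
  assumes a: "a \<in> V T" and nb: "\<not> ramified a" and e': "e' \<in> E T \<union> L T" and adj: "adjacent T a e'"
    and v: "v \<in> fibre a"
  shows "\<exists>x. {x \<in> over e'. end_over x a = v} = {x}"
proof -
  have vV: "v \<in> V G" "pV v = a" using v unfolding fibre_def by auto
  have ld1: "local_deg G pE w v e' = 1"
  proof -
    obtain v1 v2 where "v1 \<noteq> v2" "fibre a = {v1, v2}" using fibre_unramified[OF a nb] by blast
    then have "\<not> (\<exists>u. fibre a = {u})" by (metis insert_iff singletonD)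
    then show ?thesis using fibre_cases[OF a e' adj] v by auto
  qed
  have "(\<Sum>x \<in> over e'. if end_over x a = v then w x else 0) = 1" using local_deg_over[OF vV(1)] adj vV ld1
    by simp
  then have "(\<Sum>x \<in> {x \<in> over e'. end_over x a = v}. w x) = 1" by (simp add: sum.inter_filter finite_over)
  moreover have "finite {x \<in> over e'. end_over x a = v}" using finite_over by simp
  moreover have "\<forall>x \<in> {x \<in> over e'. end_over x a = v}. w x > 0"
    using weight_pos unfolding over_def by auto
  ultimately show ?thesis using sum_nat_eq_1_singleton by blast
qed

lemma end_over_inj:
  assumes a: "a \<in> V T" and nb: "\<not> ramified a" and e': "e' \<in> E T \<union> L T" and adj: "adjacent T a e'"
    and x1: "x1 \<in> over e'" and x2: "x2 \<in> over e'" and eq: "end_over x1 a = end_over x2 a"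
  shows "x1 = x2"
proof -
  have xx: "x1 \<in> E G \<union> L G" "pE x1 = e'" using x1 unfolding over_def by auto
  have "end_over x1 a \<in> fibre a" using inc_end_over[OF xx(1)] adj xx(2) unfolding fibre_def by auto
  then obtain x where xs: "{x \<in> over e'. end_over x a = end_over x1 a} = {x}"
    using unique_edge_at[OF a nb e' adj] by blast
  have "x1 \<in> {x \<in> over e'. end_over x a = end_over x1 a}" "x2 \<in> {x \<in> over e'. end_over x a = end_over x1 a}"
    using x1 x2 eq by auto
  then show ?thesis using xs by auto
qed

lemma end_over_fibre: "x \<in> over e' \<Longrightarrow> adjacent T a e' \<Longrightarrow> end_over x a \<in> fibre a"
  using inc_end_over unfolding over_def fibre_def by blast

text \<open>Sheets are labelled from the root downwards.  An edge over an even edge whose upper end is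
  ramified is labelled by comparison with an arbitrary choice; otherwise it inherits the label of its
  upper endpoint, and a vertex over an unramified vertex inherits the label of the edge above it.\<close>

definition up_edge :: "'v \<Rightarrow> 'e" where
  "up_edge v = (SOME x. x \<in> over (parent_edge (pV v)) \<and> end_over x (pV v) = v)"

definition chosen_edge :: "'te \<Rightarrow> 'e" where
  "chosen_edge e' = (SOME x. x \<in> over e')"

definition upper_end :: "'e \<Rightarrow> 'v" where
  "upper_end x = end_over x (parent (lower_end (pE x)))"

primrec sheet_at_depth :: "nat \<Rightarrow> 'v \<Rightarrow> bool" where
  "sheet_at_depth 0 v = False"
| "sheet_at_depth (Suc n) v =
    (if ramified (pV v) \<or> odd_edge (pE (up_edge v)) then False
     else if ramified (parent (lower_end (pE (up_edge v)))) then up_edge v = chosen_edge (pE (up_edge v))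
     else sheet_at_depth n (upper_end (up_edge v)))"

definition sheet :: "'v \<Rightarrow> bool" where
  "sheet v = sheet_at_depth (depth (pV v)) v"

definition edge_sheet :: "'e \<Rightarrow> bool" where
  "edge_sheet x = (if x \<in> L G then False else if odd_edge (pE x) then False
           else if ramified (parent (lower_end (pE x))) then x = chosen_edge (pE x) else sheet (upper_end x))"

lemma sheet_ramified: "ramified (pV v) \<Longrightarrow> \<not> sheet v"
  unfolding sheet_def by (cases "depth (pV v)") auto

lemma up_edge_props:
  assumes v: "v \<in> V G" and nb: "\<not> ramified (pV v)"
  shows "up_edge v \<in> over (parent_edge (pV v)) \<and> end_over (up_edge v) (pV v) = v \<and>
         (\<forall>x \<in> over (parent_edge (pV v)). end_over x (pV v) = v \<longrightarrow> x = up_edge v)"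
proof -
  define a where "a = pV v"
  have aV: "a \<in> V T" using pV_V v unfolding a_def by simp
  have ar: "a \<noteq> \<rho>" using nb ramified_root unfolding a_def by auto
  have eE: "parent_edge a \<in> E T" and adj: "adjacent T a (parent_edge a)"
    using parent_edge_E aV ar adjacent_E_iff lower_end_parent_edge by auto
  have vF: "v \<in> fibre a" using v unfolding fibre_def a_def by simp
  obtain x where x: "{x \<in> over (parent_edge a). end_over x a = v} = {x}"
    using unique_edge_at[OF aV nb[folded a_def] _ adj vF] eE by blast
  then have "up_edge v = x" unfolding up_edge_def a_def[symmetric]
    by (metis (mono_tags, lifting) mem_Collect_eq singletonD singletonI someI_ex)
  then show ?thesis using x unfolding a_def by auto
qed

lemma sheet_up_edge:
  assumes v: "v \<in> V G" and nb: "\<not> ramified (pV v)"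
  shows "sheet v = edge_sheet (up_edge v)"
proof -
  define a where "a = pV v"
  have aV: "a \<in> V T" using pV_V v unfolding a_def by simp
  have ar: "a \<noteq> \<rho>" using nb ramified_root unfolding a_def by auto
  have ep: "up_edge v \<in> over (parent_edge a)" using up_edge_props[OF v nb] unfolding a_def by simp
  have eE: "parent_edge a \<in> E T" using parent_edge_E aV ar by simp
  have eG: "up_edge v \<in> E G" "up_edge v \<notin> L G" using over_edge_subset[OF eE] ep G.E_L_disjoint by auto
  have pe: "pE (up_edge v) = parent_edge a" using ep unfolding over_def by simp
  have ch: "lower_end (parent_edge a) = a" using lower_end_parent_edge aV ar by simp
  obtain n where n: "depth a = Suc n" using depth_eq_0_iff aV ar by (cases "depth a") auto
  have dp: "depth (parent a) = n" using depth_parent[OF aV ar] n by simp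
  have pv: "pV (upper_end (up_edge v)) = parent a"
  proof -
    have "adjacent T (parent a) (parent_edge a)" using adjacent_E_iff eE ch by simp
    then show ?thesis unfolding upper_end_def using end_over_fibre[OF ep] pe ch unfolding fibre_def by auto
  qed
  have "sheet v = sheet_at_depth (Suc n) v" unfolding sheet_def a_def[symmetric] using n by simp
  also have "\<dots> = edge_sheet (up_edge v)"
    unfolding edge_sheet_def using nb eG pe ch dp pv by (simp add: sheet_def)
  finally show ?thesis .
qed

lemma edge_sheet_leg: "x \<in> L G \<Longrightarrow> \<not> edge_sheet x"
  and edge_sheet_odd: "odd_edge (pE x) \<Longrightarrow> \<not> edge_sheet x"
  unfolding edge_sheet_def by simp_all

lemma chosen_edge_over: "e' \<in> E T \<union> L T \<Longrightarrow> chosen_edge e' \<in> over e'"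
proof -
  assume e': "e' \<in> E T \<union> L T"
  have "over e' \<noteq> {}" using sum_weights_over[OF e'] by auto
  then show ?thesis unfolding chosen_edge_def by (metis ex_in_conv someI_ex)
qed

lemma edge_sheet_upper_end:
  assumes x: "x \<in> E G" and nb: "\<not> ramified (parent (lower_end (pE x)))" and nbe: "\<not> odd_edge (pE x)"
  shows "edge_sheet x = sheet (upper_end x)"
  using x nb nbe G.E_L_disjoint unfolding edge_sheet_def by auto

lemma edge_sheets_differ:
  assumes eE: "e' \<in> E T" and even: "\<not> odd_edge e'" and xx: "x1 \<noteq> x2" "over e' = {x1, x2}"
    and inj_above: "\<not> ramified (parent (lower_end e')) \<Longrightarrow> inj_on sheet (fibre (parent (lower_end e')))"
  shows "edge_sheet x1 \<noteq> edge_sheet x2"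
proof (cases "ramified (parent (lower_end e'))")
  case True
  have "chosen_edge e' \<in> {x1, x2}" using chosen_edge_over[of e'] eE xx by auto
  moreover have "edge_sheet x = (x = chosen_edge e')" if "x \<in> over e'" for x
    using that over_edge_subset[OF eE] G.E_L_disjoint even True unfolding edge_sheet_def over_def by auto
  ultimately show ?thesis using xx by auto
next
  case False
  let ?p = "parent (lower_end e')"
  have p: "?p \<in> V T" "adjacent T ?p e'" using parent_V lower_end[OF eE] adjacent_E_iff[OF eE] by auto
  have x: "x1 \<in> over e'" "x2 \<in> over e'" using xx by auto
  then have "pE x1 = e'" "pE x2 = e'" "x1 \<in> E G" "x2 \<in> E G" using over_edge_subset[OF eE] unfolding over_def
    by auto
  then have sheets: "edge_sheet x1 = sheet (end_over x1 ?p)" "edge_sheet x2 = sheet (end_over x2 ?p)"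
    using edge_sheet_upper_end False even unfolding upper_end_def by auto
  have "end_over x1 ?p \<noteq> end_over x2 ?p" using end_over_inj[OF p(1) False _ p(2) x] eE xx(1) by auto
  moreover have "end_over x1 ?p \<in> fibre ?p" "end_over x2 ?p \<in> fibre ?p" using end_over_fibre x p(2) by auto
  ultimately show ?thesis using inj_above[OF False] sheets by (auto dest: inj_onD)
qed

lemma inj_on_sheet: "a \<in> V T \<Longrightarrow> \<not> ramified a \<Longrightarrow> inj_on sheet (fibre a)"
proof (induction "depth a" arbitrary: a rule: less_induct)
  case less
  have a: "a \<in> V T" "\<not> ramified a" and ar: "a \<noteq> \<rho>" using less.prems ramified_root by auto
  have eE: "parent_edge a \<in> E T" and ch: "lower_end (parent_edge a) = a"
    using parent_edge_E[OF a(1) ar] lower_end_parent_edge[OF a(1) ar] by auto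
  have even: "\<not> odd_edge (parent_edge a)"
    using ramified_if_odd_edge[OF eE] adjacent_parent_edge[OF a(1) ar] a(2) by blast
  obtain x1 x2 where xx: "x1 \<noteq> x2" "over (parent_edge a) = {x1, x2}" using over_even_edge[OF eE even] by blast
  have "depth (parent a) < depth a" using depth_parent[OF a(1) ar] by simp
  then have "inj_on sheet (fibre (parent a))" if "\<not> ramified (parent a)"
    using less.hyps parent_V[OF a(1)] that by blast
  then have sheets: "edge_sheet x1 \<noteq> edge_sheet x2" using edge_sheets_differ[OF eE even xx] ch by simp
  obtain v1 v2 where vv: "v1 \<noteq> v2" "fibre a = {v1, v2}" using fibre_unramified[OF a] by blast
  have v: "v1 \<in> V G" "pV v1 = a" "v2 \<in> V G" "pV v2 = a" using vv unfolding fibre_def by auto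
  have up1: "up_edge v1 \<in> over (parent_edge a)" "end_over (up_edge v1) a = v1"
    using up_edge_props[OF v(1)] v(2) a(2) by auto
  have up2: "up_edge v2 \<in> over (parent_edge a)" "end_over (up_edge v2) a = v2"
    using up_edge_props[OF v(3)] v(4) a(2) by auto
  have "up_edge v1 \<noteq> up_edge v2" using up1(2) up2(2) vv(1) by auto
  then have "{up_edge v1, up_edge v2} = {x1, x2}" using up1(1) up2(1) xx(2) by auto
  then have "edge_sheet (up_edge v1) \<noteq> edge_sheet (up_edge v2)" using sheets by (auto simp: doubleton_eq_iff)
  then have "sheet v1 \<noteq> sheet v2" using sheet_up_edge[OF v(1)] sheet_up_edge[OF v(3)] v(2,4) a(2) by simp
  then show "inj_on sheet (fibre a)" using vv(2) by (auto simp: inj_on_def)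
qed

lemma inj_on_edge_sheet: "e' \<in> E T \<Longrightarrow> \<not> odd_edge e' \<Longrightarrow> inj_on edge_sheet (over e')"
proof -
  assume eE: "e' \<in> E T" and even: "\<not> odd_edge e'"
  obtain x1 x2 where xx: "x1 \<noteq> x2" "over e' = {x1, x2}" using over_even_edge[OF eE even] by blast
  have "edge_sheet x1 \<noteq> edge_sheet x2"
    using edge_sheets_differ[OF eE even xx] inj_on_sheet parent_V lower_end[OF eE] by blast
  then show ?thesis using xx by (auto simp: inj_on_def)
qed

end

context branched_cover
begin

definition iso_V :: "'v \<Rightarrow> 'tv \<times> bool" where
  "iso_V v = (pV v, sheet v)"

definition iso_E :: "'e \<Rightarrow> 'te \<times> bool" where
  "iso_E x = (pE x, edge_sheet x)"

lemma can_weight_iso_E: "x \<in> E G \<union> L G \<Longrightarrow> can_weight (iso_E x) = w x"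
proof -
  assume x: "x \<in> E G \<union> L G"
  have xe: "x \<in> over (pE x)" using x unfolding over_def by simp
  show ?thesis
  proof (cases "x \<in> E G")
    case True
    then have eE: "pE x \<in> E T" using morphism_edge by blast
    show ?thesis
    proof (cases "odd_edge (pE x)")
      case True
      then obtain x0 where "over (pE x) = {x0}" "w x0 = 2" using over_odd_edge eE by blast
      then show ?thesis using xe True eE unfolding can_weight_def iso_E_def by auto
    next
      case False
      then obtain x1 x2 where "over (pE x) = {x1, x2}" "w x1 = 1" "w x2 = 1" using over_even_edge eE by blast
      then show ?thesis using xe False eE unfolding can_weight_def iso_E_def by auto
    qed
  next
    case False
    then have xL: "x \<in> L G" using x by simp
    then have lT: "pE x \<in> L T" using morphism_leg by blast
    then obtain x0 where "over (pE x) = {x0}" "w x0 = 2" using over_leg by blast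
    moreover have "pE x \<notin> E T" using lT T.E_L_disjoint by auto
    ultimately show ?thesis using xe unfolding can_weight_def iso_E_def by auto
  qed
qed

lemma iso_V_end:
  assumes x: "x \<in> E G" and p: "p = fst (ends G x) \<or> p = snd (ends G x)"
  shows "iso_V p = sheet_vertex (pV p) (edge_sheet x)"
proof -
  define a where "a = pV p"
  have p_V: "p \<in> V G" using G.edge_ends_V[OF x] p by auto
  have i: "inc G p x > 0" using p x unfolding inc_def by auto
  have ia: "adjacent T a (pE x)" "end_over x a = p" using adjacent_if_inc[OF p_V _ i] x unfolding a_def
    by auto
  have eE: "pE x \<in> E T" using morphism_edge x by blast
  show ?thesis
  proof (cases "ramified a")
    case True
    then show ?thesis using sheet_ramified unfolding iso_V_def sheet_vertex_def a_def by auto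
  next
    case False
    have nbe: "\<not> odd_edge (pE x)" using ramified_if_odd_edge[OF eE _ ia(1)] False by blast
    define c where "c = lower_end (pE x)"
    have cV: "c \<in> V T" "c \<noteq> \<rho>" "parent_edge c = pE x" using lower_end[OF eE] unfolding c_def by auto
    have "a = c \<or> a = parent c" using adjacent_E_iff[OF eE] ia(1) unfolding c_def by simp
    then have "sheet p = edge_sheet x"
    proof
      assume ac: "a = c"
      have xe: "x \<in> over (parent_edge (pV p))" using x cV ac unfolding over_def a_def by simp
      have "x = up_edge p" using up_edge_props[OF p_V] False ia(2) xe unfolding a_def by auto
      then show ?thesis using sheet_up_edge[OF p_V] False unfolding a_def by simp
    next
      assume ap: "a = parent c"
      have "edge_sheet x = sheet (upper_end x)" using edge_sheet_upper_end[OF x] False nbe ap unfolding c_def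
        by simp
      moreover have "upper_end x = p" unfolding upper_end_def using ia(2) ap unfolding c_def by simp
      ultimately show ?thesis by simp
    qed
    then show ?thesis using False unfolding iso_V_def sheet_vertex_def a_def by simp
  qed
qed

lemma ex_sheet_over:
  assumes a: "a \<in> V T" and b: "b \<longrightarrow> \<not> ramified a"
  shows "\<exists>v \<in> fibre a. sheet v = b"
proof (cases "ramified a")
  case True
  then show ?thesis using fibre_ramified[OF a] b sheet_ramified unfolding fibre_def by fastforce
next
  case False
  then obtain v1 v2 where "v1 \<noteq> v2" "fibre a = {v1, v2}" using fibre_unramified[OF a] by blast
  moreover have "sheet v1 \<noteq> sheet v2" using calculation inj_on_sheet[OF a False] by (auto dest: inj_onD)
  ultimately show ?thesis by (cases b) auto
qed

lemma bij_iso_V: "bij_betw iso_V (V G) (V can_cover)"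
  unfolding bij_betw_def
proof
  show "inj_on iso_V (V G)"
  proof (rule inj_onI)
    fix v v' assume v: "v \<in> V G" "v' \<in> V G" and eq: "iso_V v = iso_V v'"
    then have in_fibre: "v \<in> fibre (pV v)" "v' \<in> fibre (pV v)" and "sheet v = sheet v'"
      unfolding iso_V_def fibre_def by auto
    show "v = v'"
    proof (cases "ramified (pV v)")
      case True
      then show ?thesis using fibre_ramified[OF pV_V[OF v(1)]] in_fibre by auto
    next
      case False
      then show ?thesis using inj_onD[OF inj_on_sheet[OF pV_V[OF v(1)] False]] in_fibre \<open>sheet v = sheet v'\<close>
        by blast
    qed
  qed
  show "iso_V ` V G = V can_cover"
  proof
    show "iso_V ` V G \<subseteq> V can_cover"
      using pV_V sheet_ramified unfolding iso_V_def can_cover_simps by auto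
    show "V can_cover \<subseteq> iso_V ` V G"
    proof
      fix y assume "y \<in> V can_cover"
      then obtain a b where y: "y = (a, b)" "a \<in> V T" "b \<longrightarrow> \<not> ramified a" unfolding can_cover_simps by auto
      then obtain v where "v \<in> fibre a" "sheet v = b" using ex_sheet_over by blast
      then show "y \<in> iso_V ` V G" using y unfolding fibre_def iso_V_def by force
    qed
  qed
qed

lemma ex_edge_sheet_over:
  assumes e': "e' \<in> E T" and b: "b \<longrightarrow> \<not> odd_edge e'"
  shows "\<exists>x \<in> over e'. edge_sheet x = b"
proof (cases "odd_edge e'")
  case True
  then show ?thesis using over_odd_edge[OF e'] b edge_sheet_odd unfolding over_def by fastforce
next
  case False
  then obtain x1 x2 where "x1 \<noteq> x2" "over e' = {x1, x2}" using over_even_edge[OF e'] by blast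
  moreover have "edge_sheet x1 \<noteq> edge_sheet x2" using calculation inj_on_edge_sheet[OF e' False]
    by (auto dest: inj_onD)
  ultimately show ?thesis by (cases b) auto
qed

lemma bij_iso_E: "bij_betw iso_E (E G) (E can_cover)"
  unfolding bij_betw_def
proof
  show "inj_on iso_E (E G)"
  proof (rule inj_onI)
    fix x x' assume x: "x \<in> E G" "x' \<in> E G" and eq: "iso_E x = iso_E x'"
    then have e': "pE x \<in> E T" using morphism_edge by blast
    from x eq have in_over: "x \<in> over (pE x)" "x' \<in> over (pE x)" and "edge_sheet x = edge_sheet x'"
      unfolding iso_E_def over_def by auto
    show "x = x'"
    proof (cases "odd_edge (pE x)")
      case True
      then show ?thesis using over_odd_edge[OF e'] in_over by auto
    next
      case False
      then show ?thesis using inj_onD[OF inj_on_edge_sheet[OF e' False]] in_over \<open>edge_sheet x = edge_sheet x'\<close> by blast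
    qed
  qed
  show "iso_E ` E G = E can_cover"
  proof
    show "iso_E ` E G \<subseteq> E can_cover"
      using morphism_edge edge_sheet_odd unfolding iso_E_def can_cover_simps by auto
    show "E can_cover \<subseteq> iso_E ` E G"
    proof
      fix y assume "y \<in> E can_cover"
      then obtain e' b where y: "y = (e', b)" "e' \<in> E T" "b \<longrightarrow> \<not> odd_edge e'" unfolding can_cover_simps by auto
      then obtain x where "x \<in> over e'" "edge_sheet x = b" using ex_edge_sheet_over by blast
      then show "y \<in> iso_E ` E G" using y over_edge_subset[OF y(2)] unfolding over_def iso_E_def by force
    qed
  qed
qed

lemma bij_iso_L: "bij_betw iso_E (L G) (L can_cover)"
  unfolding bij_betw_def
proof
  show "inj_on iso_E (L G)"
  proof (rule inj_onI)
    fix x x' assume "x \<in> L G" "x' \<in> L G" "iso_E x = iso_E x'"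
    then have "x \<in> over (pE x)" "x' \<in> over (pE x)" unfolding iso_E_def over_def by auto
    moreover obtain u where "over (pE x) = {u}" using over_leg morphism_leg \<open>x \<in> L G\<close> by blast
    ultimately show "x = x'" by auto
  qed
  show "iso_E ` L G = L can_cover"
  proof
    show "iso_E ` L G \<subseteq> L can_cover"
      using morphism_leg edge_sheet_leg unfolding iso_E_def can_cover_simps by auto
    show "L can_cover \<subseteq> iso_E ` L G"
    proof
      fix y assume "y \<in> L can_cover"
      then obtain l where y: "y = (l, False)" "l \<in> L T" unfolding can_cover_simps by auto
      then obtain x where "over l = {x}" using over_leg by blast
      then show "y \<in> iso_E ` L G"
        using y over_leg_subset[OF y(2)] edge_sheet_leg unfolding over_def iso_E_def by force
    qed
  qed
qed

lemma iso_covers_can_cover: "iso_covers G pV pE w can_cover fst fst can_weight"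
  unfolding iso_covers_def
proof (intro exI[of _ iso_V] exI[of _ iso_E] conjI ballI)
  show "bij_betw iso_V (V G) (V can_cover)" "bij_betw iso_E (E G) (E can_cover)" "bij_betw iso_E (L G) (L can_cover)"
    using bij_iso_V bij_iso_E bij_iso_L by auto
next
  fix x assume x: "x \<in> E G"
  have m: "pE x \<in> E T" "w x > 0"
    "{# pV (fst (ends G x)), pV (snd (ends G x)) #} = {# fst (ends T (pE x)), snd (ends T (pE x)) #}"
    "len T (pE x) = real (w x) * len G x" using morphism_edge[OF x] by auto
  have f1: "iso_V (fst (ends G x)) = sheet_vertex (pV (fst (ends G x))) (edge_sheet x)" using iso_V_end[OF x]
    by simp
  have f2: "iso_V (snd (ends G x)) = sheet_vertex (pV (snd (ends G x))) (edge_sheet x)" using iso_V_end[OF x]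
    by simp
  have ec: "ends can_cover (iso_E x) =
      (sheet_vertex (fst (ends T (pE x))) (edge_sheet x), sheet_vertex (snd (ends T (pE x))) (edge_sheet x))"
    by (simp add: iso_E_def can_cover_simps(4))
  show "{# iso_V (fst (ends G x)), iso_V (snd (ends G x)) #} =
      {# fst (ends can_cover (iso_E x)), snd (ends can_cover (iso_E x)) #}"
    unfolding f1 f2 ec using mset_pair_eq[OF m(3)] by auto
  have "can_weight (iso_E x) = w x" using can_weight_iso_E x by simp
  then show "len can_cover (iso_E x) = len G x" unfolding can_cover_simps using m(2) m(4) unfolding iso_E_def
    by simp
next
  fix x assume x: "x \<in> L G"
  have m: "pE x \<in> L T" "pV (fst (ends G x)) = fst (ends T (pE x))" using morphism_leg[OF x] by auto
  have b: "ramified (pV (fst (ends G x)))" using ramified_at_leg[OF m(1)] m(2) by simp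
  show "iso_V (fst (ends G x)) = fst (ends can_cover (iso_E x))"
    unfolding iso_E_def iso_V_def using m b sheet_ramified edge_sheet_leg[OF x]
    by (simp add: can_cover_simps(4) sheet_vertex_def)
next
  fix v assume v: "v \<in> V G"
  show "gen can_cover (iso_V v) = gen G v" "fst (iso_V v) = pV v" unfolding iso_V_def
    using gen_G_eq[OF v] can_cover_simps(6) by simp_all
next
  fix x assume x: "x \<in> E G \<union> L G"
  show "fst (iso_E x) = pE x" "can_weight (iso_E x) = w x" using can_weight_iso_E[OF x] unfolding iso_E_def
    by simp_all
qed

end

context leg_rooted_tree
begin

lemma covers_branched_at_legs_isomorphic:
  fixes G1 :: "('v1, 'e1) mgraph" and G2 :: "('v2, 'e2) mgraph"
  assumes "hyperelliptic_cover G1 T pV1 pE1 w1" "\<forall>l \<in> L T. branch_point G1 pE1 w1 l"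
    and "hyperelliptic_cover G2 T pV2 pE2 w2" "\<forall>l \<in> L T. branch_point G2 pE2 w2 l"
  shows "iso_covers G1 pV1 pE1 w1 G2 pV2 pE2 w2"
proof -
  interpret C1: branched_cover T \<rho> G1 pV1 pE1 w1 using assms(1,2) by unfold_locales
  interpret C2: branched_cover T \<rho> G2 pV2 pE2 w2 using assms(3,4) by unfold_locales
  show ?thesis
    using iso_covers_trans[OF C1.iso_covers_can_cover
        iso_covers_sym[OF C2.G.metric_graph metric_graph_can_cover C2.iso_covers_can_cover]] .
qed

end

lemma leg_rooted_tree_exists:
  assumes "genus0_tree T" and "L T \<noteq> {}" and "even (card (L T))"
  shows "\<exists>\<rho>. leg_rooted_tree T \<rho>"
proof -
  obtain l where l: "l \<in> L T" using assms(2) by blast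
  have "fst (ends T l) \<in> V T"
    using assms(1) l unfolding genus0_tree_def metric_graph_def by simp
  then have "leg_rooted_tree T (fst (ends T l))"
    using assms l unfolding leg_rooted_tree_def leg_rooted_tree_axioms_def rooted_tree_def by blast
  then show ?thesis by blast
qed

text \<open>The third hypothesis is already part of \<open>genus0_tree T\<close>.\<close>

theorem proposition4p7:
  fixes T :: "('tv, 'te) mgraph"
  assumes "genus0_tree T"
    and "card (L T) = 6"
    and "\<forall>v \<in> V T. gen T v = 0"
  shows "(\<exists>(G :: (nat, nat) mgraph) pV pE w. genus2_cover_branched_at_legs G T pV pE w) \<and>
         (\<forall>(G1 :: ('v1, 'e1) mgraph) pV1 pE1 w1 (G2 :: ('v2, 'e2) mgraph) pV2 pE2 w2.
            genus2_cover_branched_at_legs G1 T pV1 pE1 w1 \<longrightarrow>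
            genus2_cover_branched_at_legs G2 T pV2 pE2 w2 \<longrightarrow>
            iso_covers G1 pV1 pE1 w1 G2 pV2 pE2 w2)"
proof -
  obtain \<rho> where "leg_rooted_tree T \<rho>"
    using leg_rooted_tree_exists[OF assms(1)] assms(2) by fastforce
  then interpret leg_rooted_tree T \<rho> .
  have "genus2_cover_branched_at_legs can_cover T fst fst can_weight"
    unfolding genus2_cover_branched_at_legs_def
    using hyperelliptic_can_cover genus_can_cover card_L_can_cover branch_point_can_cover assms(2) by simp
  then show ?thesis
    using genus2_cover_relabelled_nat covers_branched_at_legs_isomorphic
    unfolding genus2_cover_branched_at_legs_def by blast
qed

end
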